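(* The operator $\Gamma$ defined below is the Choi–Jamiolkowski operator of a separable CPTP map from $\mathbf L(\mathcal H_1\otimes\mathcal H_3\otimes\mathcal H_5)$ to $\mathbf L(\mathcal H_2\otimes\mathcal H_4\otimes\mathcal H_6)$, and this map cannot be implemented by any finite-round three-party LOCC protocol in which the first party acts $\mathcal H_1\to\mathcal H_2$, the second $\mathcal H_3\to\mathcal H_4$ and the third $\mathcal H_5\to\mathcal H_6$.
   Context: $\mathcal H_1,\mathcal H_3,\mathcal H_5\cong\mathbb C^2$ and $\mathcal H_2,\mathcal H_4,\mathcal H_6\cong\mathbb C^2\otimes\mathbb C^2$. On each pair ($\mathcal H_1\otimes\mathcal H_2$, $\mathcal H_3\otimes\mathcal H_4$, $\mathcal H_5\otimes\mathcal H_6$) define $|\mathbf 0\rangle=|0\rangle|00\rangle$, $|\mathbf 1\rangle=|1\rangle|01\rangle$, $|\mathbf 2\rangle=|+\rangle|10\rangle$, $|\mathbf 3\rangle=|-\rangle|11\rangle$, with $|\pm\rangle=(|0\rangle\pm|1\rangle)/\sqrt2$, and $[\mathbf x]:=|\mathbf x\rangle\langle\mathbf x|$. Let $T=\{(0,0,0),(1,2,0),(2,3,0),(3,1,0),(0,3,1),(1,1,1),(2,0,1),(3,2,1),(0,1,2),(1,3,2),(2,2,2),(3,0,2),(0,2,3),(1,0,3),(2,1,3),(3,3,3)\}$ and $\Gamma=\frac12\sum_{(a,b,c)\in T}[\mathbf a]\otimes[\mathbf b]\otimes[\mathbf c]$. The Choi–Jamiolkowski operator of a linear map $\mathcal M:\mathbf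 L(\mathcal H_{in})\to\mathbf L(\mathcal H_{out})$ is $\sum_{k,l}|k\rangle\langle l|\otimes\mathcal M(|k\rangle\langle l|)$ in the computational basis of $\mathcal H_{in}$. A map is separable if it has Kraus operators of product form $E^{(1)}_k\otimes E^{(2)}_k\otimes E^{(3)}_k$. Finite-round three-party LOCC: finitely many rounds in which one party at a time applies a local quantum instrument and broadcasts its outcome, with later operations allowed to depend on earlier outcomes, all outcomes summed at the end. *)

theory Defs
  imports Complex_Main "Jordan_Normal_Form.Matrix"
begin

text \<open>Operators on finite-dimensional Hilbert spaces C^d are complex matrices (JNF type
  complex mat) w.r.t. the computational basis; tensor products are Kronecker products
  (big-endian ordering, so the basis vector |i>|j> of C^m (x) C^n has index i*n+j).\<close>

type_synonym cmat = "complex mat"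

definition kron :: "cmat \<Rightarrow> cmat \<Rightarrow> cmat" where
  "kron A B = mat (dim_row A * dim_row B) (dim_col A * dim_col B)
     (\<lambda>(i,j). A $$ (i div dim_row B, j div dim_col B) * B $$ (i mod dim_row B, j mod dim_col B))"

definition adj :: "cmat \<Rightarrow> cmat" where
  "adj A = mat (dim_col A) (dim_row A) (\<lambda>(i,j). cnj (A $$ (j,i)))"

definition tr :: "cmat \<Rightarrow> complex" where
  "tr A = (\<Sum>i<dim_row A. A $$ (i,i))"

definition msum :: "nat \<Rightarrow> nat \<Rightarrow> cmat list \<Rightarrow> cmat" where
  "msum r c Xs = foldr (+) Xs (0\<^sub>m r c)"

definition ket :: "nat \<Rightarrow> nat \<Rightarrow> cmat" where
  "ket d k = mat d 1 (\<lambda>(i,j). if i = k then 1 else 0)"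

definition proj :: "cmat \<Rightarrow> cmat" where
  "proj v = v * adj v"

definition kraus_apply :: "nat \<Rightarrow> cmat list \<Rightarrow> cmat \<Rightarrow> cmat" where
  "kraus_apply dout Ks X = msum dout dout (map (\<lambda>K. K * X * adj K) Ks)"

text \<open>Choi-Jamiolkowski operator sum_{k,l} |k><l| (x) M(|k><l|), written entrywise:
  entry ((k*dout+o),(l*dout+o')) equals the (o,o') entry of M(|k><l|).\<close>
definition choi :: "nat \<Rightarrow> nat \<Rightarrow> (cmat \<Rightarrow> cmat) \<Rightarrow> cmat" where
  "choi din dout M = mat (din*dout) (din*dout)
     (\<lambda>(i,j). M (ket din (i div dout) * adj (ket din (j div dout))) $$ (i mod dout, j mod dout))"

definition CP_map :: "nat \<Rightarrow> nat \<Rightarrow> (cmat \<Rightarrow> cmat) \<Rightarrow> bool" where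
  "CP_map din dout M \<longleftrightarrow> (\<exists>Ks. set Ks \<subseteq> carrier_mat dout din \<and>
      (\<forall>X \<in> carrier_mat din din. M X = kraus_apply dout Ks X))"

definition TP_map :: "nat \<Rightarrow> nat \<Rightarrow> (cmat \<Rightarrow> cmat) \<Rightarrow> bool" where
  "TP_map din dout M \<longleftrightarrow> (\<forall>X \<in> carrier_mat din din. M X \<in> carrier_mat dout dout \<and> tr (M X) = tr X)"

definition CPTP_map :: "nat \<Rightarrow> nat \<Rightarrow> (cmat \<Rightarrow> cmat) \<Rightarrow> bool" where
  "CPTP_map din dout M \<longleftrightarrow> CP_map din dout M \<and> TP_map din dout M"

definition prod3 :: "cmat \<times> cmat \<times> cmat \<Rightarrow> cmat" where
  "prod3 E = (case E of (E1,E2,E3) \<Rightarrow> kron (kron E1 E2) E3)"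

definition separable3 :: "nat \<times> nat \<times> nat \<Rightarrow> nat \<times> nat \<times> nat \<Rightarrow> (cmat \<Rightarrow> cmat) \<Rightarrow> bool" where
  "separable3 a b M \<longleftrightarrow> (case a of (a1,a2,a3) \<Rightarrow> case b of (b1,b2,b3) \<Rightarrow>
     (\<exists>Es. (\<forall>(E1,E2,E3) \<in> set Es. E1 \<in> carrier_mat b1 a1 \<and> E2 \<in> carrier_mat b2 a2 \<and> E3 \<in> carrier_mat b3 a3) \<and>
       (\<forall>X \<in> carrier_mat (a1*a2*a3) (a1*a2*a3). M X = kraus_apply (b1*b2*b3) (map prod3 Es) X)))"

text \<open>Finite-round three-party LOCC protocols, as a finite tree.
  locc_tree bout d Ls: starting with local systems of dimensions d = (d1,d2,d3), a
  finite-round protocol ending with local systems of dimensions bout produces the (product)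
  Kraus operators Ls (each component maps the current local space to the final local space).
  In a round, one party applies a local quantum instrument: each outcome is a triple
  (d', Ks, Ls) where d' is the party's new local dimension, Ks are the Kraus operators of
  the CP map of that outcome, and Ls is the result of the continuation protocol, which may
  depend on the broadcast outcome.\<close>
inductive locc_tree :: "nat \<times> nat \<times> nat \<Rightarrow> nat \<times> nat \<times> nat \<Rightarrow> (cmat \<times> cmat \<times> cmat) list \<Rightarrow> bool"
  for bout :: "nat \<times> nat \<times> nat" where
  stop: "bout = (d1,d2,d3) \<Longrightarrow> locc_tree bout (d1,d2,d3) [(1\<^sub>m d1, 1\<^sub>m d2, 1\<^sub>m d3)]"
| round1: "\<lbrakk> \<forall>(d', Ks, Ls) \<in> set outs. set Ks \<subseteq> carrier_mat d' d1 \<and> locc_tree bout (d', d2, d3) Ls;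
     msum d1 d1 (concat (map (\<lambda>(d', Ks, Ls). map (\<lambda>K. adj K * K) Ks) outs)) = 1\<^sub>m d1 \<rbrakk>
   \<Longrightarrow> locc_tree bout (d1,d2,d3)
        (concat (map (\<lambda>(d', Ks, Ls). concat (map (\<lambda>K. map (\<lambda>(L1,L2,L3). (L1 * K, L2, L3)) Ls) Ks)) outs))"
| round2: "\<lbrakk> \<forall>(d', Ks, Ls) \<in> set outs. set Ks \<subseteq> carrier_mat d' d2 \<and> locc_tree bout (d1, d', d3) Ls;
     msum d2 d2 (concat (map (\<lambda>(d', Ks, Ls). map (\<lambda>K. adj K * K) Ks) outs)) = 1\<^sub>m d2 \<rbrakk>
   \<Longrightarrow> locc_tree bout (d1,d2,d3)
        (concat (map (\<lambda>(d', Ks, Ls). concat (map (\<lambda>K. map (\<lambda>(L1,L2,L3). (L1, L2 * K, L3)) Ls) Ks)) outs))"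
| round3: "\<lbrakk> \<forall>(d', Ks, Ls) \<in> set outs. set Ks \<subseteq> carrier_mat d' d3 \<and> locc_tree bout (d1, d2, d') Ls;
     msum d3 d3 (concat (map (\<lambda>(d', Ks, Ls). map (\<lambda>K. adj K * K) Ks) outs)) = 1\<^sub>m d3 \<rbrakk>
   \<Longrightarrow> locc_tree bout (d1,d2,d3)
        (concat (map (\<lambda>(d', Ks, Ls). concat (map (\<lambda>K. map (\<lambda>(L1,L2,L3). (L1, L2, L3 * K)) Ls) Ks)) outs))"

definition LOCC3 :: "nat \<times> nat \<times> nat \<Rightarrow> nat \<times> nat \<times> nat \<Rightarrow> (cmat \<Rightarrow> cmat) \<Rightarrow> bool" where
  "LOCC3 a b M \<longleftrightarrow> (case a of (a1,a2,a3) \<Rightarrow> case b of (b1,b2,b3) \<Rightarrow>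
     (\<exists>Ls. locc_tree b a Ls \<and>
       (\<forall>X \<in> carrier_mat (a1*a2*a3) (a1*a2*a3). M X = kraus_apply (b1*b2*b3) (map prod3 Ls) X)))"

definition qket :: "nat \<Rightarrow> cmat" where
  "qket x = (if x = 0 then ket 2 0 else if x = 1 then ket 2 1
             else if x = 2 then complex_of_real (1 / sqrt 2) \<cdot>\<^sub>m (ket 2 0 + ket 2 1)
             else complex_of_real (1 / sqrt 2) \<cdot>\<^sub>m (ket 2 0 - ket 2 1))"

definition bket :: "nat \<Rightarrow> cmat" where
  "bket x = kron (qket x) (ket 4 x)"

definition Tset :: "(nat \<times> nat \<times> nat) list" where
  "Tset = [(0,0,0),(1,2,0),(2,3,0),(3,1,0),(0,3,1),(1,1,1),(2,0,1),(3,2,1),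
           (0,1,2),(1,3,2),(2,2,2),(3,0,2),(0,2,3),(1,0,3),(2,1,3),(3,3,3)]"

text \<open>Gamma on (H1 (x) H2) (x) (H3 (x) H4) (x) (H5 (x) H6), dimension 8*8*8.\<close>
definition Gamma :: cmat where
  "Gamma = (1/2 :: complex) \<cdot>\<^sub>m msum 512 512
     (map (\<lambda>(a,b,c). kron (kron (proj (bket a)) (proj (bket b))) (proj (bket c))) Tset)"

text \<open>Canonical reordering of tensor factors: index in (H1(x)H3(x)H5)(x)(H2(x)H4(x)H6)
  (the Choi ordering) to index in H1(x)H2(x)H3(x)H4(x)H5(x)H6.\<close>
definition reidx :: "nat \<Rightarrow> nat" where
  "reidx x = (let inp = x div 64; out = x mod 64;
                  i1 = inp div 4; i3 = (inp div 2) mod 2; i5 = inp mod 2;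
                  i2 = out div 16; i4 = (out div 4) mod 4; i6 = out mod 4
              in ((i1*4+i2)*8 + (i3*4+i4))*8 + (i5*4+i6))"

definition Gamma_choi_order :: cmat where
  "Gamma_choi_order = mat 512 512 (\<lambda>(i,j). Gamma $$ (reidx i, reidx j))"

end

theory Submission
  imports Defs
begin

text \<open>
  Gamma is the Choi operator of the map with Kraus operators (1/sqrt 2) E_a (x) E_b (x) E_c for (a,b,c)
  in T, where E_a = |a><q_a| : C^2 -> C^4. This map is separable, and it is trace preserving because
  the 16 product vectors q_a (x) q_b (x) q_c, (a,b,c) in T, form a tight frame of C^8.

  Conversely, every Kraus operator of any implementation of Gamma must map the output |a>|b>|c> only from
  the input q_a (x) q_b (x) q_c, and must vanish on outputs with (a,b,c) outside T. A finite LOCC protocol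
  is a tree of local instruments. We show by induction over the tree that, after composing with local
  isometries from the qubits into the current local spaces, its leaves cannot all have this shape. At a
  leaf the composed operator is a product of three isometries C^2 -> C^4, each nonzero on at least two
  rows; this would put two triples of T that differ only in their first entry, which T (a Latin square)
  does not contain. In a round of some party, the Gram operator of each branch, computed from the leaves
  below it, is a weighted sum of the frame operators v_t v_t^T that acts on that party's qubit alone;
  for this T that forces it to be a multiple of the identity. A nonzero multiple rescales to an isometry
  and contradicts the induction hypothesis for that branch, and if all are zero they cannot sum to the
  identity, as the completeness of the instrument demands.
\<close>

section \<open>Matrix algebra\<close>

lemma index_mult_mat_sum:
  assumes "A \<in> carrier_mat r n" "B \<in> carrier_mat n c" "i < r" "j < c"
  shows "(A * B) $$ (i,j) = (\<Sum>m<n. A $$ (i,m) * B $$ (m,j))"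
  using assms by (auto simp: scalar_prod_def intro!: sum.cong)

lemma sum_lessThan_mult_div_mod:
  fixes f :: "nat \<Rightarrow> nat \<Rightarrow> 'a::comm_monoid_add"
  shows "(\<Sum>m<a*b. f (m div b) (m mod b)) = (\<Sum>x<a. \<Sum>y<b. f x y)"
proof -
  have "(\<Sum>x<a. \<Sum>y<b. f x y) = (\<Sum>p\<in>{..<a}\<times>{..<b}. f (fst p) (snd p))"
    by (simp add: sum.cartesian_product case_prod_beta)
  also have "\<dots> = (\<Sum>m<a*b. f (m div b) (m mod b))"
  proof (rule sum.reindex_bij_witness[where i="\<lambda>m. (m div b, m mod b)" and j="\<lambda>p. fst p * b + snd p"])
    fix m assume m: "m \<in> {..<a*b}"
    then show "fst (m div b, m mod b) * b + snd (m div b, m mod b) = m" by simp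
    from m have "b > 0" by (cases "b = 0") auto
    with m show "(m div b, m mod b) \<in> {..<a}\<times>{..<b}"
      by (auto simp: less_mult_imp_div_less)
  next
    fix p assume p: "p \<in> {..<a}\<times>{..<b}"
    then obtain x y where xy: "p = (x,y)" "x < a" "y < b" by auto
    have "x * b + y < (x + 1) * b" using xy by simp
    also have "\<dots> \<le> a * b" using xy by (intro mult_le_mono1) simp
    finally show "((fst p * b + snd p) div b, (fst p * b + snd p) mod b) = p"
      "fst p * b + snd p \<in> {..<a*b}"
      "f ((fst p * b + snd p) div b) ((fst p * b + snd p) mod b) = f (fst p) (snd p)"
      using xy by auto
  qed
  finally show ?thesis by simp
qed

lemma div_less_of_less_mult: "i < a * (b::nat) \<Longrightarrow> i div b < a"
  by (simp add: less_mult_imp_div_less)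

lemma mod_less_of_less_mult: "i < a * (b::nat) \<Longrightarrow> i mod b < b"
  by (cases "b = 0") auto

lemmas div_mod_bounds = div_less_of_less_mult mod_less_of_less_mult

lemma adj_dims [simp]: "dim_row (adj A) = dim_col A" "dim_col (adj A) = dim_row A"
  by (simp_all add: adj_def)

lemma adj_carrier_mat: "A \<in> carrier_mat r c \<Longrightarrow> adj A \<in> carrier_mat c r"
  by (rule carrier_matI) auto

lemma index_adj [simp]: "i < dim_col A \<Longrightarrow> j < dim_row A \<Longrightarrow> adj A $$ (i,j) = cnj (A $$ (j,i))"
  by (simp add: adj_def)

lemma adj_adj [simp]: "adj (adj A) = A"
  by (rule eq_matI) auto

lemma adj_one [simp]: "adj (1\<^sub>m n) = 1\<^sub>m n"
  by (rule eq_matI) auto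

lemma adj_smult: "adj (a \<cdot>\<^sub>m A) = cnj a \<cdot>\<^sub>m adj A"
  by (rule eq_matI) auto

lemma adj_mult:
  assumes A: "A \<in> carrier_mat r n" and B: "B \<in> carrier_mat n c"
  shows "adj (A * B) = adj B * adj A"
proof (rule eq_matI)
  fix i j assume "i < dim_row (adj B * adj A)" "j < dim_col (adj B * adj A)"
  then have i: "i < c" and j: "j < r" using assms by auto
  have "(adj B * adj A) $$ (i,j) = (\<Sum>m<n. cnj (A $$ (j,m) * B $$ (m,i)))"
    using assms i j
    by (simp add: index_mult_mat_sum[OF adj_carrier_mat[OF B] adj_carrier_mat[OF A] i j] mult.commute)
  also have "\<dots> = adj (A * B) $$ (i,j)"
    using assms i j by (simp add: index_mult_mat_sum[OF A B j i])
  finally show "adj (A * B) $$ (i, j) = (adj B * adj A) $$ (i, j)" by simp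
qed (use assms in auto)

lemma adj_mult_sandwich:
  assumes K: "K \<in> carrier_mat n m" and W: "W \<in> carrier_mat m c"
  shows "adj (K * W) * (K * W) = adj W * (adj K * K) * W"
proof -
  have aK: "adj K \<in> carrier_mat m n" and aW: "adj W \<in> carrier_mat c m"
    using K W by (simp_all add: adj_carrier_mat)
  have "adj (K * W) * (K * W) = (adj W * adj K) * (K * W)" by (simp add: adj_mult[OF K W])
  also have "\<dots> = adj W * (adj K * (K * W))" by (rule assoc_mult_mat[OF aW aK mult_carrier_mat[OF K W]])
  also have "adj K * (K * W) = (adj K * K) * W" by (rule assoc_mult_mat[OF aK K W, symmetric])
  also have "adj W * ((adj K * K) * W) = adj W * (adj K * K) * W"
    by (rule assoc_mult_mat[OF aW mult_carrier_mat[OF aK K] W, symmetric])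
  finally show ?thesis .
qed

lemma kron_dims [simp]:
  "dim_row (kron A B) = dim_row A * dim_row B" "dim_col (kron A B) = dim_col A * dim_col B"
  unfolding kron_def by simp_all

lemma kron_carrier_mat:
  "A \<in> carrier_mat r1 c1 \<Longrightarrow> B \<in> carrier_mat r2 c2 \<Longrightarrow> kron A B \<in> carrier_mat (r1*r2) (c1*c2)"
  by (rule carrier_matI) auto

lemma index_kron:
  "i < dim_row A * dim_row B \<Longrightarrow> j < dim_col A * dim_col B \<Longrightarrow>
   kron A B $$ (i,j) = A $$ (i div dim_row B, j div dim_col B) * B $$ (i mod dim_row B, j mod dim_col B)"
  by (simp add: kron_def)

lemma kron_mult:
  assumes A: "A \<in> carrier_mat r1 c1" and B: "B \<in> carrier_mat c1 e1"
    and C: "C \<in> carrier_mat r2 c2" and D: "D \<in> carrier_mat c2 e2"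
  shows "kron A C * kron B D = kron (A * B) (C * D)"
proof (rule eq_matI)
  fix i j assume "i < dim_row (kron (A * B) (C * D))" "j < dim_col (kron (A * B) (C * D))"
  then have i: "i < r1 * r2" and j: "j < e1 * e2" using assms by auto
  have "(kron A C * kron B D) $$ (i,j) = (\<Sum>m<c1*c2. kron A C $$ (i,m) * kron B D $$ (m,j))"
    by (rule index_mult_mat_sum[OF kron_carrier_mat[OF A C] kron_carrier_mat[OF B D] i j])
  also have "\<dots> = (\<Sum>m<c1*c2. (A $$ (i div r2, m div c2) * B $$ (m div c2, j div e2)) *
        (C $$ (i mod r2, m mod c2) * D $$ (m mod c2, j mod e2)))"
    using assms i j by (intro sum.cong refl) (auto simp: index_kron div_mod_bounds)
  also have "\<dots> = (\<Sum>x<c1. \<Sum>y<c2. (A $$ (i div r2, x) * B $$ (x, j div e2)) *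
        (C $$ (i mod r2, y) * D $$ (y, j mod e2)))"
    by (rule sum_lessThan_mult_div_mod)
  also have "\<dots> = (\<Sum>x<c1. A $$ (i div r2, x) * B $$ (x, j div e2)) *
        (\<Sum>y<c2. C $$ (i mod r2, y) * D $$ (y, j mod e2))"
    by (simp add: sum_product)
  also have "\<dots> = (A * B) $$ (i div r2, j div e2) * (C * D) $$ (i mod r2, j mod e2)"
    using i j by (simp add: index_mult_mat_sum[OF A B] index_mult_mat_sum[OF C D] div_mod_bounds)
  also have "\<dots> = kron (A * B) (C * D) $$ (i,j)"
    using assms i j by (simp add: index_kron)
  finally show "(kron A C * kron B D) $$ (i,j) = kron (A * B) (C * D) $$ (i,j)" .
qed (use assms in auto)

lemma adj_kron: "adj (kron A B) = kron (adj A) (adj B)"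
  by (rule eq_matI) (auto simp: index_kron div_mod_bounds)

lemma kron_one: "kron (1\<^sub>m a) (1\<^sub>m b) = 1\<^sub>m (a*b)"
proof (rule eq_matI)
  fix i j assume "i < dim_row (1\<^sub>m (a * b))" "j < dim_col (1\<^sub>m (a * b))"
  then have i: "i < a*b" and j: "j < a*b" by auto
  have "(i div b = j div b \<and> i mod b = j mod b) = (i = j)"
    by (metis div_mod_decomp)
  then show "kron (1\<^sub>m a) (1\<^sub>m b) $$ (i, j) = 1\<^sub>m (a * b) $$ (i, j)"
    using i j by (auto simp: index_kron div_mod_bounds)
qed auto

lemma kron_smult_left: "kron (c \<cdot>\<^sub>m A) B = c \<cdot>\<^sub>m kron A B"
  by (rule eq_matI) (auto simp: index_kron div_mod_bounds)

lemma kron_smult_right: "kron A (c \<cdot>\<^sub>m B) = c \<cdot>\<^sub>m kron A B"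
  by (rule eq_matI) (auto simp: index_kron div_mod_bounds)

lemma kron_add_left:
  "A \<in> carrier_mat r c \<Longrightarrow> B \<in> carrier_mat r c \<Longrightarrow> kron (A + B) C = kron A C + kron B C"
  by (rule eq_matI) (auto simp: index_kron div_mod_bounds algebra_simps)

lemma kron_add_right:
  "A \<in> carrier_mat r c \<Longrightarrow> B \<in> carrier_mat r c \<Longrightarrow> kron C (A + B) = kron C A + kron C B"
  by (rule eq_matI) (auto simp: index_kron div_mod_bounds algebra_simps)

lemma kron_zero_left: "kron (0\<^sub>m r c) C = 0\<^sub>m (r * dim_row C) (c * dim_col C)"
  by (rule eq_matI) (auto simp: index_kron div_mod_bounds)

lemma kron_zero_right: "kron C (0\<^sub>m r c) = 0\<^sub>m (dim_row C * r) (dim_col C * c)"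
  by (rule eq_matI) (auto simp: index_kron div_mod_bounds)

lemma msum_Nil [simp]: "msum r c [] = 0\<^sub>m r c"
  by (simp add: msum_def)

lemma msum_Cons [simp]: "msum r c (X # Xs) = X + msum r c Xs"
  by (simp add: msum_def)

lemma msum_carrier_mat: "set Xs \<subseteq> carrier_mat r c \<Longrightarrow> msum r c Xs \<in> carrier_mat r c"
  by (induction Xs) auto

lemma index_msum:
  "set Xs \<subseteq> carrier_mat r c \<Longrightarrow> i < r \<Longrightarrow> j < c \<Longrightarrow>
   msum r c Xs $$ (i,j) = (\<Sum>X\<leftarrow>Xs. X $$ (i,j))"
proof (induction Xs)
  case (Cons X Xs)
  then show ?case using msum_carrier_mat[of Xs r c] by auto
qed auto

lemma msum_append:
  "set Xs \<subseteq> carrier_mat r c \<Longrightarrow> set Ys \<subseteq> carrier_mat r c \<Longrightarrow>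
   msum r c (Xs @ Ys) = msum r c Xs + msum r c Ys"
  by (induction Xs) (auto simp: msum_carrier_mat assoc_add_mat[of _ r c])

lemma msum_concat:
  "(\<And>X. X \<in> set (concat Xss) \<Longrightarrow> X \<in> carrier_mat r c) \<Longrightarrow>
   msum r c (concat Xss) = msum r c (map (msum r c) Xss)"
proof (induction Xss)
  case (Cons Xs Xss)
  then have "set Xs \<subseteq> carrier_mat r c" "set (concat Xss) \<subseteq> carrier_mat r c" by auto
  with Cons show ?case by (simp add: msum_append)
qed simp

lemma msum_map_concat:
  assumes "\<And>xs x. xs \<in> set xss \<Longrightarrow> x \<in> set xs \<Longrightarrow> f x \<in> carrier_mat r c"
  shows "msum r c (map f (concat xss)) = msum r c (map (\<lambda>xs. msum r c (map f xs)) xss)"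
proof -
  have "msum r c (concat (map (map f) xss)) = msum r c (map (msum r c) (map (map f) xss))"
    using assms by (intro msum_concat) auto
  then show ?thesis by (simp add: map_concat o_def)
qed

lemma msum_mult_sandwich:
  assumes "\<And>x. x \<in> set xs \<Longrightarrow> f x \<in> carrier_mat n n" "B \<in> carrier_mat m n" "C \<in> carrier_mat n p"
  shows "msum m p (map (\<lambda>x. B * f x * C) xs) = B * msum n n (map f xs) * C"
  using assms
proof (induction xs)
  case (Cons x xs)
  have S: "msum n n (map f xs) \<in> carrier_mat n n" using Cons by (intro msum_carrier_mat) auto
  have fx: "f x \<in> carrier_mat n n" using Cons by auto
  have "B * (f x + msum n n (map f xs)) * C = (B * f x + B * msum n n (map f xs)) * C"
    using mult_add_distrib_mat[OF Cons.prems(2) fx S] by simp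
  also have "\<dots> = B * f x * C + B * msum n n (map f xs) * C"
    using Cons.prems S fx by (intro add_mult_distrib_mat) auto
  finally show ?case using Cons.IH Cons.prems by simp
qed simp

lemma msum_mult_left:
  assumes "\<And>x. x \<in> set xs \<Longrightarrow> f x \<in> carrier_mat n p" "B \<in> carrier_mat m n"
  shows "msum m p (map (\<lambda>x. B * f x) xs) = B * msum n p (map f xs)"
  using assms
proof (induction xs)
  case (Cons x xs)
  have S: "msum n p (map f xs) \<in> carrier_mat n p" using Cons.prems by (intro msum_carrier_mat) auto
  have fx: "f x \<in> carrier_mat n p" using Cons.prems by simp
  show ?case using Cons mult_add_distrib_mat[OF Cons.prems(2) fx S] by simp
qed simp

lemma msum_kron_left:
  "(\<And>x. x \<in> set xs \<Longrightarrow> f x \<in> carrier_mat r c) \<Longrightarrow>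
   msum (r * dim_row C) (c * dim_col C) (map (\<lambda>x. kron (f x) C) xs) = kron (msum r c (map f xs)) C"
proof (induction xs)
  case (Cons x xs)
  have S: "msum r c (map f xs) \<in> carrier_mat r c" using Cons.prems by (intro msum_carrier_mat) auto
  have fx: "f x \<in> carrier_mat r c" using Cons.prems by simp
  show ?case using Cons kron_add_left[OF fx S] by simp
qed (simp add: kron_zero_left)

lemma msum_kron_right:
  "(\<And>x. x \<in> set xs \<Longrightarrow> f x \<in> carrier_mat r c) \<Longrightarrow>
   msum (dim_row C * r) (dim_col C * c) (map (\<lambda>x. kron C (f x)) xs) = kron C (msum r c (map f xs))"
proof (induction xs)
  case (Cons x xs)
  have S: "msum r c (map f xs) \<in> carrier_mat r c" using Cons.prems by (intro msum_carrier_mat) auto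
  have fx: "f x \<in> carrier_mat r c" using Cons.prems by simp
  show ?case using Cons kron_add_right[OF fx S] by simp
qed (simp add: kron_zero_right)

lemma tr_eq_sum: "A \<in> carrier_mat n n \<Longrightarrow> tr A = (\<Sum>i<n. A $$ (i,i))"
  by (simp add: tr_def)

lemma tr_mult_commute:
  assumes A: "A \<in> carrier_mat n m" and B: "B \<in> carrier_mat m n"
  shows "tr (A * B) = tr (B * A)"
proof -
  have "tr (A * B) = (\<Sum>i<n. \<Sum>j<m. A $$ (i,j) * B $$ (j,i))"
    unfolding tr_eq_sum[OF mult_carrier_mat[OF A B]] by (intro sum.cong refl index_mult_mat_sum[OF A B]) auto
  also have "\<dots> = (\<Sum>j<m. \<Sum>i<n. B $$ (j,i) * A $$ (i,j))"
    by (subst sum.swap) (simp add: mult.commute)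
  also have "\<dots> = tr (B * A)"
    unfolding tr_eq_sum[OF mult_carrier_mat[OF B A]] by (intro sum.cong refl index_mult_mat_sum[OF B A, symmetric]) auto
  finally show ?thesis .
qed

lemma tr_msum: "set Xs \<subseteq> carrier_mat n n \<Longrightarrow> tr (msum n n Xs) = (\<Sum>X\<leftarrow>Xs. tr X)"
proof (induction Xs)
  case (Cons X Xs)
  then have "msum n n Xs \<in> carrier_mat n n" by (intro msum_carrier_mat) auto
  with Cons show ?case by (simp add: tr_eq_sum[of _ n] sum.distrib)
qed (simp add: tr_def)

lemma ket_carrier_mat: "ket d k \<in> carrier_mat d 1" by (simp add: ket_def)

lemma index_ket: "i < d \<Longrightarrow> ket d k $$ (i,0) = (if i = k then 1 else 0)" by (simp add: ket_def)

lemma proj_carrier_mat: "v \<in> carrier_mat n 1 \<Longrightarrow> proj v \<in> carrier_mat n n"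
  unfolding proj_def by (intro mult_carrier_mat[OF _ adj_carrier_mat])

lemma index_proj: "v \<in> carrier_mat n 1 \<Longrightarrow> x < n \<Longrightarrow> y < n \<Longrightarrow> proj v $$ (x,y) = v $$ (x,0) * cnj (v $$ (y,0))"
  unfolding proj_def by (subst index_mult_mat_sum[OF _ adj_carrier_mat, of v n 1 v n]) auto

lemma index_gram_0_0:
  assumes A: "A \<in> carrier_mat n 2"
  shows "(adj A * A) $$ (0,0) = complex_of_real (\<Sum>i<n. (cmod (A $$ (i,0)))\<^sup>2)"
proof -
  have "(adj A * A) $$ (0,0) = (\<Sum>i<n. adj A $$ (0,i) * A $$ (i,0))"
    by (rule index_mult_mat_sum[OF adj_carrier_mat[OF A] A]) auto
  also have "\<dots> = (\<Sum>i<n. complex_of_real ((cmod (A $$ (i,0)))\<^sup>2))"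
  proof (rule sum.cong[OF refl])
    fix i assume "i \<in> {..<n}"
    then have "adj A $$ (0,i) = cnj (A $$ (i,0))" using A by simp
    then show "adj A $$ (0,i) * A $$ (i,0) = complex_of_real ((cmod (A $$ (i,0)))\<^sup>2)"
      using complex_norm_square[of "A $$ (i,0)"] by (simp only: mult.commute)
  qed
  finally show ?thesis by simp
qed

lemma isometry_rescale:
  assumes A: "A \<in> carrier_mat n 2" and AA: "adj A * A = complex_of_real p \<cdot>\<^sub>m 1\<^sub>m 2" and p: "p > 0"
  shows "adj (complex_of_real (1 / sqrt p) \<cdot>\<^sub>m A) * (complex_of_real (1 / sqrt p) \<cdot>\<^sub>m A) = 1\<^sub>m 2"
proof -
  have "adj (complex_of_real (1 / sqrt p) \<cdot>\<^sub>m A) * (complex_of_real (1 / sqrt p) \<cdot>\<^sub>m A)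
      = (complex_of_real (1 / sqrt p) \<cdot>\<^sub>m adj A) * (complex_of_real (1 / sqrt p) \<cdot>\<^sub>m A)"
    by (simp add: adj_smult)
  also have "\<dots> = complex_of_real (1 / sqrt p) \<cdot>\<^sub>m (complex_of_real (1 / sqrt p) \<cdot>\<^sub>m (adj A * A))"
    using A by (simp add: mult_smult_assoc_mat[OF adj_carrier_mat[OF A] smult_carrier_mat[OF A]] mult_smult_distrib[OF adj_carrier_mat[OF A] A])
  also have "\<dots> = 1\<^sub>m 2"
  proof (rule eq_matI)
    fix i j assume "i < dim_row (1\<^sub>m 2 :: cmat)" "j < dim_col (1\<^sub>m 2 :: cmat)"
    then have ij: "i < 2" "j < 2" by auto
    have "complex_of_real (1 / sqrt p) * complex_of_real (1 / sqrt p) * complex_of_real p = 1"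
    proof -
      have "(1 / sqrt p) * (1 / sqrt p) * p = 1" using p by (simp add: field_simps)
      then have "complex_of_real ((1 / sqrt p) * (1 / sqrt p) * p) = 1" by simp
      then show ?thesis by (simp only: of_real_mult)
    qed
    then show "(complex_of_real (1 / sqrt p) \<cdot>\<^sub>m (complex_of_real (1 / sqrt p) \<cdot>\<^sub>m (adj A * A))) $$ (i,j) = (1\<^sub>m 2 :: cmat) $$ (i,j)"
      using ij A AA by (simp add: mult.assoc)
  qed (use A AA in auto)
  finally show ?thesis .
qed

section \<open>Kraus maps and their Choi operators\<close>

lemma index_kraus_term:
  assumes K: "K \<in> carrier_mat n m" and "k < m" "l < m" "i < n" "j < n"
  shows "(K * (ket m k * adj (ket m l)) * adj K) $$ (i,j) = K $$ (i,k) * cnj (K $$ (j,l))"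
proof -
  have E: "ket m k * adj (ket m l) \<in> carrier_mat m m"
    using ket_carrier_mat[of m k] ket_carrier_mat[of m l] by (intro mult_carrier_mat[OF _ adj_carrier_mat])
  have Ee: "(ket m k * adj (ket m l)) $$ (a,b) = (if a = k \<and> b = l then 1 else 0)" if "a < m" "b < m" for a b
    using that by (subst index_mult_mat_sum[OF ket_carrier_mat adj_carrier_mat[OF ket_carrier_mat]]) (auto simp: ket_def)
  have KE: "(K * (ket m k * adj (ket m l))) $$ (i,b) = (if b = l then K $$ (i,k) else 0)" if "b < m" for b
  proof -
    have "(K * (ket m k * adj (ket m l))) $$ (i,b) = (\<Sum>a<m. K $$ (i,a) * (ket m k * adj (ket m l)) $$ (a,b))"
      by (rule index_mult_mat_sum[OF K E \<open>i < n\<close> that])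
    also have "\<dots> = (\<Sum>a<m. if a = k then (if b = l then K $$ (i,k) else 0) else 0)"
      using that by (intro sum.cong) (auto simp: Ee)
    also have "\<dots> = (if b = l then K $$ (i,k) else 0)" using \<open>k < m\<close> by simp
    finally show ?thesis .
  qed
  have "(K * (ket m k * adj (ket m l)) * adj K) $$ (i,j) = (\<Sum>b<m. (K * (ket m k * adj (ket m l))) $$ (i,b) * adj K $$ (b,j))"
    by (rule index_mult_mat_sum[OF mult_carrier_mat[OF K E] adj_carrier_mat[OF K] \<open>i < n\<close> \<open>j < n\<close>])
  also have "\<dots> = (\<Sum>b<m. if b = l then K $$ (i,k) * cnj (K $$ (j,l)) else 0)"
    using K \<open>j < n\<close> by (intro sum.cong) (auto simp: KE)
  also have "\<dots> = K $$ (i,k) * cnj (K $$ (j,l))" using \<open>l < m\<close> by simp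
  finally show ?thesis .
qed

lemma index_choi_kraus:
  assumes Ks: "set Ks \<subseteq> carrier_mat dout din" and M: "\<forall>X\<in>carrier_mat din din. M X = kraus_apply dout Ks X"
    and kl: "k < din" "l < din" and o: "o1 < dout" "o2 < dout"
  shows "choi din dout M $$ (k*dout+o1, l*dout+o2) = (\<Sum>K\<leftarrow>Ks. K $$ (o1,k) * cnj (K $$ (o2,l)))"
proof -
  have less: "x*dout + y < din*dout" if "x < din" "y < dout" for x y
  proof -
    have "x*dout + y < (x+1)*dout" using that by simp
    also have "\<dots> \<le> din*dout" using that by (intro mult_le_mono1) simp
    finally show ?thesis .
  qed
  let ?E = "ket din k * adj (ket din l)"
  have E: "?E \<in> carrier_mat din din"
    using ket_carrier_mat[of din k] ket_carrier_mat[of din l] by (intro mult_carrier_mat[OF _ adj_carrier_mat])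
  have c: "set (map (\<lambda>K. K * ?E * adj K) Ks) \<subseteq> carrier_mat dout dout"
    using Ks E by (auto intro!: mult_carrier_mat[OF mult_carrier_mat[OF _ E] adj_carrier_mat])
  have "choi din dout M $$ (k*dout+o1, l*dout+o2) = M ?E $$ (o1, o2)"
    unfolding choi_def using less kl o by simp
  also have "\<dots> = (\<Sum>K\<leftarrow>Ks. (K * ?E * adj K) $$ (o1,o2))"
    using M E o unfolding kraus_apply_def by (simp add: index_msum[OF c] o_def)
  also have "\<dots> = (\<Sum>K\<leftarrow>Ks. K $$ (o1,k) * cnj (K $$ (o2,l)))"
    using Ks kl o by (intro arg_cong[where f=sum_list] map_cong refl index_kraus_term) auto
  finally show ?thesis .
qed

lemma kraus_apply_TP_map:
  assumes Ks: "set Ks \<subseteq> carrier_mat m n" and complete: "msum n n (map (\<lambda>K. adj K * K) Ks) = 1\<^sub>m n"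
  shows "TP_map n m (kraus_apply m Ks)"
  unfolding TP_map_def
proof
  fix X :: cmat assume X: "X \<in> carrier_mat n n"
  have cK: "\<And>K. K \<in> set Ks \<Longrightarrow> K \<in> carrier_mat m n" using Ks by auto
  have c1: "set (map (\<lambda>K. K * X * adj K) Ks) \<subseteq> carrier_mat m m"
    using cK X by (auto intro!: mult_carrier_mat[OF mult_carrier_mat adj_carrier_mat])
  have cyclic: "tr (K * X * adj K) = tr (X * (adj K * K))" if K: "K \<in> carrier_mat m n" for K
  proof -
    have "tr (K * X * adj K) = tr (adj K * (K * X))"
      by (rule tr_mult_commute[OF mult_carrier_mat[OF K X] adj_carrier_mat[OF K]])
    also have "adj K * (K * X) = (adj K * K) * X" by (rule assoc_mult_mat[OF adj_carrier_mat[OF K] K X, symmetric])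
    also have "tr ((adj K * K) * X) = tr (X * (adj K * K))"
      by (rule tr_mult_commute[OF mult_carrier_mat[OF adj_carrier_mat[OF K] K] X])
    finally show ?thesis .
  qed
  have "tr (kraus_apply m Ks X) = (\<Sum>K\<leftarrow>Ks. tr (K * X * adj K))"
    unfolding kraus_apply_def by (simp add: tr_msum[OF c1] o_def)
  also have "\<dots> = (\<Sum>K\<leftarrow>Ks. tr (X * (adj K * K)))"
    using cK cyclic by (intro arg_cong[where f=sum_list] map_cong) auto
  also have "\<dots> = tr (msum n n (map (\<lambda>K. X * (adj K * K)) Ks))"
    using cK X by (subst tr_msum) (auto simp: o_def intro!: mult_carrier_mat adj_carrier_mat)
  also have "msum n n (map (\<lambda>K. X * (adj K * K)) Ks) = X * msum n n (map (\<lambda>K. adj K * K) Ks)"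
    using cK X by (intro msum_mult_left) (auto intro!: mult_carrier_mat adj_carrier_mat)
  also have "\<dots> = X" unfolding complete using X by simp
  finally have "tr (kraus_apply m Ks X) = tr X" .
  moreover have "kraus_apply m Ks X \<in> carrier_mat m m"
    unfolding kraus_apply_def by (rule msum_carrier_mat[OF c1])
  ultimately show "kraus_apply m Ks X \<in> carrier_mat m m \<and> tr (kraus_apply m Ks X) = tr X" by simp
qed

section \<open>Triples of local operators\<close>

datatype party = Alice | Bob | Charlie

type_synonym cmat3 = "cmat \<times> cmat \<times> cmat"

fun slot :: "party \<Rightarrow> 'a \<times> 'a \<times> 'a \<Rightarrow> 'a" where
  "slot Alice (x,y,z) = x"
| "slot Bob (x,y,z) = y"
| "slot Charlie (x,y,z) = z"

fun upd_slot :: "party \<Rightarrow> 'a \<Rightarrow> 'a \<times> 'a \<times> 'a \<Rightarrow> 'a \<times> 'a \<times> 'a" where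
  "upd_slot Alice v (x,y,z) = (v,y,z)"
| "upd_slot Bob v (x,y,z) = (x,v,z)"
| "upd_slot Charlie v (x,y,z) = (x,y,v)"

fun dim3 :: "nat \<times> nat \<times> nat \<Rightarrow> nat" where
  "dim3 (a,b,c) = a * b * c"

fun carrier3 :: "nat \<times> nat \<times> nat \<Rightarrow> nat \<times> nat \<times> nat \<Rightarrow> cmat3 set" where
  "carrier3 (r1,r2,r3) (c1,c2,c3) = carrier_mat r1 c1 \<times> carrier_mat r2 c2 \<times> carrier_mat r3 c3"

fun mult3 :: "cmat3 \<Rightarrow> cmat3 \<Rightarrow> cmat3" where
  "mult3 (A1,A2,A3) (B1,B2,B3) = (A1 * B1, A2 * B2, A3 * B3)"

fun one3 :: "nat \<times> nat \<times> nat \<Rightarrow> cmat3" where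
  "one3 (a,b,c) = (1\<^sub>m a, 1\<^sub>m b, 1\<^sub>m c)"

definition gram3 :: "cmat3 \<Rightarrow> cmat" where
  "gram3 L = adj (prod3 L) * prod3 L"

lemma prod3_eq: "prod3 (A,B,C) = kron (kron A B) C"
  by (simp add: prod3_def)

lemma index_prod3:
  assumes "A \<in> carrier_mat r1 c1" "B \<in> carrier_mat r2 c2" "C \<in> carrier_mat r3 c3"
    "i < r1*r2*r3" "j < c1*c2*c3"
  shows "prod3 (A,B,C) $$ (i,j) = A $$ (i div (r2*r3), j div (c2*c3)) * B $$ ((i div r3) mod r2, (j div c3) mod c2)
     * C $$ (i mod r3, j mod c3)"
proof -
  have d: "dim_row A = r1" "dim_col A = c1" "dim_row B = r2" "dim_col B = c2" "dim_row C = r3" "dim_col C = c3"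
    using assms by auto
  have i8: "i div r3 < r1 * r2" "j div c3 < c1 * c2" using assms(4,5) by (auto simp: div_less_of_less_mult mult.assoc[symmetric])
  have "prod3 (A,B,C) $$ (i,j) = kron A B $$ (i div r3, j div c3) * C $$ (i mod r3, j mod c3)"
    unfolding prod3_eq using assms d by (simp add: index_kron)
  also have "kron A B $$ (i div r3, j div c3) = A $$ (i div r3 div r2, j div c3 div c2) * B $$ ((i div r3) mod r2, (j div c3) mod c2)"
    using i8 d by (simp add: index_kron)
  also have "i div r3 div r2 = i div (r2*r3)" by (subst mult.commute) (rule div_mult2_eq[symmetric])
  also have "j div c3 div c2 = j div (c2*c3)" by (subst mult.commute) (rule div_mult2_eq[symmetric])
  finally show ?thesis .
qed

lemma prod3_carrier_mat: "L \<in> carrier3 r c \<Longrightarrow> prod3 L \<in> carrier_mat (dim3 r) (dim3 c)"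
  by (cases L; cases r; cases c) (auto simp: prod3_eq intro!: kron_carrier_mat)

lemma prod3_mult3:
  assumes "L \<in> carrier3 r m" "W \<in> carrier3 m c"
  shows "prod3 (mult3 L W) = prod3 L * prod3 W"
proof -
  obtain A1 A2 A3 B1 B2 B3 where LW: "L = (A1,A2,A3)" "W = (B1,B2,B3)" by (cases L; cases W) auto
  obtain r1 r2 r3 m1 m2 m3 c1 c2 c3 where d: "r = (r1,r2,r3)" "m = (m1,m2,m3)" "c = (c1,c2,c3)"
    by (cases r; cases m; cases c) auto
  have A: "A1 \<in> carrier_mat r1 m1" "A2 \<in> carrier_mat r2 m2" "A3 \<in> carrier_mat r3 m3"
    and B: "B1 \<in> carrier_mat m1 c1" "B2 \<in> carrier_mat m2 c2" "B3 \<in> carrier_mat m3 c3"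
    using assms unfolding LW d by auto
  show ?thesis
    unfolding LW mult3.simps prod3_eq
    by (simp add: kron_mult[OF kron_carrier_mat[OF A(1,2)] kron_carrier_mat[OF B(1,2)] A(3) B(3)]
        kron_mult[OF A(1) B(1) A(2) B(2)])
qed

lemma adj_prod3: "adj (prod3 (A,B,C)) = prod3 (adj A, adj B, adj C)"
  by (simp add: prod3_eq adj_kron)

lemma prod3_one3: "prod3 (one3 d) = 1\<^sub>m (dim3 d)"
  by (cases d) (simp add: prod3_eq kron_one)

lemma mult3_carrier3: "L \<in> carrier3 r m \<Longrightarrow> W \<in> carrier3 m c \<Longrightarrow> mult3 L W \<in> carrier3 r c"
  by (cases L; cases W; cases r; cases m; cases c) auto

lemma mult3_one3_right: "L \<in> carrier3 r c \<Longrightarrow> mult3 L (one3 c) = L"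
  by (cases L; cases r; cases c) auto

lemma mult3_assoc:
  "L \<in> carrier3 r m \<Longrightarrow> V \<in> carrier3 m n \<Longrightarrow> W \<in> carrier3 n c \<Longrightarrow>
   mult3 (mult3 L V) W = mult3 L (mult3 V W)"
  by (cases L; cases V; cases W; cases r; cases m; cases n; cases c) auto

lemma slot_carrier3: "L \<in> carrier3 r c \<Longrightarrow> slot p L \<in> carrier_mat (slot p r) (slot p c)"
  by (cases p; cases L; cases r; cases c) auto

lemma upd_slot_carrier3:
  "L \<in> carrier3 r c \<Longrightarrow> X \<in> carrier_mat r' c' \<Longrightarrow> upd_slot p X L \<in> carrier3 (upd_slot p r' r) (upd_slot p c' c)"
  by (cases p; cases L; cases r; cases c) auto

lemma one3_carrier3: "one3 d \<in> carrier3 d d"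
  by (cases d) auto

lemma slot_upd_slot [simp]: "slot p (upd_slot p v t) = v"
  by (cases p; cases t) auto

lemma upd_slot_upd_slot [simp]: "upd_slot p v (upd_slot p v' t) = upd_slot p v t"
  by (cases p; cases t) auto

lemma upd_slot_slot [simp]: "upd_slot p (slot p d) d = d"
  by (cases p; cases d) auto

lemma upd_slot_one_one3 [simp]: "upd_slot p (1\<^sub>m (slot p d)) (one3 d) = one3 d"
  by (cases p; cases d) auto

lemma gram3_eq: "gram3 (A,B,C) = prod3 (adj A * A, adj B * B, adj C * C)"
proof -
  have "\<And>X. X \<in> carrier_mat (dim_row X) (dim_col X)" by auto
  then show ?thesis
    unfolding gram3_def adj_prod3
    by (subst prod3_mult3[where r="(dim_col A, dim_col B, dim_col C)" and m="(dim_row A, dim_row B, dim_row C)"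
        and c="(dim_col A, dim_col B, dim_col C)", symmetric]) (auto simp: adj_carrier_mat)
qed

lemma gram3_carrier_mat: "L \<in> carrier3 r c \<Longrightarrow> gram3 L \<in> carrier_mat (dim3 c) (dim3 c)"
  unfolding gram3_def by (auto intro!: mult_carrier_mat adj_carrier_mat prod3_carrier_mat)

lemma gram3_mult3:
  assumes L: "L \<in> carrier3 b m" and W: "W \<in> carrier3 m c"
  shows "gram3 (mult3 L W) = adj (prod3 W) * gram3 L * prod3 W"
proof -
  have PL: "prod3 L \<in> carrier_mat (dim3 b) (dim3 m)" and PW: "prod3 W \<in> carrier_mat (dim3 m) (dim3 c)"
    using L W by (simp_all add: prod3_carrier_mat)
  have "gram3 (mult3 L W) = adj (prod3 L * prod3 W) * (prod3 L * prod3 W)"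
    unfolding gram3_def prod3_mult3[OF L W] ..
  also have "\<dots> = adj (prod3 W) * gram3 L * prod3 W"
    unfolding gram3_def by (rule adj_mult_sandwich[OF PL PW])
  finally show ?thesis .
qed

lemma msum_gram3_mult3:
  assumes Ls: "set Ls \<subseteq> carrier3 b m" and complete: "msum (dim3 m) (dim3 m) (map gram3 Ls) = 1\<^sub>m (dim3 m)"
    and W: "W \<in> carrier3 m c"
  shows "msum (dim3 c) (dim3 c) (map (\<lambda>L. gram3 (mult3 L W)) Ls) = gram3 W"
proof -
  have PW: "prod3 W \<in> carrier_mat (dim3 m) (dim3 c)" using W by (rule prod3_carrier_mat)
  have G: "gram3 L \<in> carrier_mat (dim3 m) (dim3 m)" if "L \<in> set Ls" for L
    using that Ls prod3_carrier_mat[of L b m] unfolding gram3_def by (auto intro!: mult_carrier_mat adj_carrier_mat)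
  have "map (\<lambda>L. gram3 (mult3 L W)) Ls = map (\<lambda>L. adj (prod3 W) * gram3 L * prod3 W) Ls"
    using Ls W by (auto simp: gram3_mult3)
  also have "msum (dim3 c) (dim3 c) \<dots> = adj (prod3 W) * msum (dim3 m) (dim3 m) (map gram3 Ls) * prod3 W"
    using G PW by (intro msum_mult_sandwich adj_carrier_mat)
  also have "\<dots> = gram3 W"
    unfolding complete gram3_def using PW by (simp add: adj_carrier_mat)
  finally show ?thesis .
qed

lemma msum_prod3_upd_slot:
  assumes f: "\<And>x. x \<in> set xs \<Longrightarrow> f x \<in> carrier_mat r' c'" and T: "T \<in> carrier3 r c"
  shows "msum (dim3 (upd_slot p r' r)) (dim3 (upd_slot p c' c)) (map (\<lambda>x. prod3 (upd_slot p (f x) T)) xs)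
       = prod3 (upd_slot p (msum r' c' (map f xs)) T)"
proof -
  obtain A B C where T3: "T = (A,B,C)" by (cases T) auto
  obtain r1 r2 r3 c1 c2 c3 where rc: "r = (r1,r2,r3)" "c = (c1,c2,c3)" by (cases r; cases c) auto
  have ABC: "A \<in> carrier_mat r1 c1" "B \<in> carrier_mat r2 c2" "C \<in> carrier_mat r3 c3"
    using T unfolding T3 rc by auto
  have kl: "\<And>g R Cc X. (\<And>x. x \<in> set xs \<Longrightarrow> g x \<in> carrier_mat R Cc) \<Longrightarrow>
    msum (R * dim_row X) (Cc * dim_col X) (map (\<lambda>x. kron (g x) X) xs) = kron (msum R Cc (map g xs)) X"
    by (rule msum_kron_left)
  have kr: "\<And>g R Cc X. (\<And>x. x \<in> set xs \<Longrightarrow> g x \<in> carrier_mat R Cc) \<Longrightarrow>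
    msum (dim_row X * R) (dim_col X * Cc) (map (\<lambda>x. kron X (g x)) xs) = kron X (msum R Cc (map g xs))"
    by (rule msum_kron_right)
  show ?thesis
  proof (cases p)
    case Alice
    have "msum (r'*r2) (c'*c2) (map (\<lambda>x. kron (f x) B) xs) = kron (msum r' c' (map f xs)) B"
      using kl[OF f, where X=B] ABC by simp
    moreover have "msum (r'*r2*r3) (c'*c2*c3) (map (\<lambda>x. kron (kron (f x) B) C) xs)
        = kron (msum (r'*r2) (c'*c2) (map (\<lambda>x. kron (f x) B) xs)) C"
      using kl[of "\<lambda>x. kron (f x) B" "r'*r2" "c'*c2" C] f ABC by (auto intro: kron_carrier_mat)
    ultimately show ?thesis unfolding Alice T3 rc by (simp add: prod3_eq)
  next
    case Bob
    have "msum (r1*r') (c1*c') (map (\<lambda>x. kron A (f x)) xs) = kron A (msum r' c' (map f xs))"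
      using kr[OF f, where X=A] ABC by simp
    moreover have "msum (r1*r'*r3) (c1*c'*c3) (map (\<lambda>x. kron (kron A (f x)) C) xs)
        = kron (msum (r1*r') (c1*c') (map (\<lambda>x. kron A (f x)) xs)) C"
      using kl[of "\<lambda>x. kron A (f x)" "r1*r'" "c1*c'" C] f ABC by (auto intro: kron_carrier_mat)
    ultimately show ?thesis unfolding Bob T3 rc by (simp add: prod3_eq)
  next
    case Charlie
    have "msum (r1*r2*r') (c1*c2*c') (map (\<lambda>x. kron (kron A B) (f x)) xs) = kron (kron A B) (msum r' c' (map f xs))"
      using kr[OF f, where X="kron A B"] ABC by simp
    then show ?thesis unfolding Charlie T3 rc by (simp add: prod3_eq)
  qed
qed

lemma mult3_upd_slot_one3:
  "L \<in> carrier3 b (upd_slot p e d) \<Longrightarrow> mult3 L (upd_slot p K (one3 d)) = upd_slot p (slot p L * K) L"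
  by (cases p; cases L; cases d; cases b) auto

lemma upd_slot_one3_mult3:
  "W \<in> carrier3 d c \<Longrightarrow> mult3 (upd_slot p K (one3 d)) W = upd_slot p (K * slot p W) W"
  by (cases p; cases W; cases d; cases c) auto

lemma gram3_one3: "gram3 (one3 d) = 1\<^sub>m (dim3 d)"
  by (cases d) (simp add: gram3_eq prod3_one3[of "(_,_,_)", simplified])

lemma gram3_upd_slot_one3: "gram3 (upd_slot p K (one3 d)) = prod3 (upd_slot p (adj K * K) (one3 d))"
  by (cases p; cases d) (simp_all add: gram3_eq)

section \<open>Finite-round LOCC protocol trees\<close>

lemma locc_tree_carrier3:
  assumes "locc_tree b d Ls"
  shows "set Ls \<subseteq> carrier3 b d"
proof -
  obtain b1 b2 b3 where b: "b = (b1,b2,b3)" by (cases b) auto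
  from assms show ?thesis
    unfolding b
  proof (induction rule: locc_tree.induct)
    case (round1 outs d1 d2 d3)
    then show ?case by (fastforce simp: subset_iff)
  next
    case (round2 outs d2 d1 d3)
    then show ?case by (fastforce simp: subset_iff)
  next
    case (round3 outs d3 d1 d2)
    then show ?case by (fastforce simp: subset_iff)
  qed auto
qed

lemma concat_round_as_branches:
  assumes "\<And>e Ks Ls K L. (e,Ks,Ls) \<in> set outs \<Longrightarrow> K \<in> set Ks \<Longrightarrow> L \<in> set Ls \<Longrightarrow> g K L = h K L"
  shows "concat (map (\<lambda>(e,Ks,Ls). concat (map (\<lambda>K. map (g K) Ls) Ks)) outs)
       = concat (map (\<lambda>(K,e,Ls). map (h K) Ls) (concat (map (\<lambda>(e,Ks,Ls). map (\<lambda>K. (K,e,Ls)) Ks) outs)))"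
  using assms
proof (induction outs)
  case (Cons out outs)
  obtain e Ks Ls where out: "out = (e,Ks,Ls)" by (cases out) auto
  have "concat (map (\<lambda>K. map (g K) Ls) Ks) = concat (map (\<lambda>K. map (h K) Ls) Ks)"
    using Cons.prems[of e Ks Ls] out by (auto intro!: arg_cong[where f=concat] map_cong)
  moreover have "concat (map (\<lambda>(e,Ks,Ls). concat (map (\<lambda>K. map (g K) Ls) Ks)) outs)
       = concat (map (\<lambda>(K,e,Ls). map (h K) Ls) (concat (map (\<lambda>(e,Ks,Ls). map (\<lambda>K. (K,e,Ls)) Ks) outs)))"
    by (rule Cons.IH, rule Cons.prems) auto
  ultimately show ?case using out by (simp add: o_def)
qed simp

lemma concat_kraus_as_branches:
  "concat (map (\<lambda>(e,Ks,Ls). map f Ks) outs)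
   = map (\<lambda>(K,e,Ls). f K) (concat (map (\<lambda>(e,Ks,Ls). map (\<lambda>K. (K,e,Ls)) Ks) outs))"
  by (induction outs) (auto simp: map_concat o_def)

text \<open>Induction over protocol trees with the three kinds of rounds merged into one: a round of
  party p is a list of branches (K, e, Ls), where K is a Kraus operator of the instrument, e the new
  local dimension of p and Ls the Kraus operators produced by the continuation.\<close>
lemma locc_tree_round_induct [consumes 1, case_names leaf round]:
  assumes tree: "locc_tree b d Ls"
    and leaf: "P b [one3 b]"
    and round: "\<And>p d Bs.
      (\<And>K e Ls. (K,e,Ls) \<in> set Bs \<Longrightarrow> K \<in> carrier_mat e (slot p d) \<and> locc_tree b (upd_slot p e d) Ls \<and> P (upd_slot p e d) Ls) \<Longrightarrow>
      msum (slot p d) (slot p d) (map (\<lambda>(K,e,Ls). adj K * K) Bs) = 1\<^sub>m (slot p d) \<Longrightarrow>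
      P d (concat (map (\<lambda>(K,e,Ls). map (\<lambda>L. mult3 L (upd_slot p K (one3 d))) Ls) Bs))"
  shows "P d Ls"
proof -
  have step: "P d (concat (map (\<lambda>(e,Ks,Ls). concat (map (\<lambda>K. map (g K) Ls) Ks)) outs))"
    if outs: "\<forall>(e,Ks,Ls)\<in>set outs. set Ks \<subseteq> carrier_mat e (slot p d) \<and> locc_tree b (upd_slot p e d) Ls \<and> P (upd_slot p e d) Ls"
      and complete: "msum (slot p d) (slot p d) (concat (map (\<lambda>(e,Ks,Ls). map (\<lambda>K. adj K * K) Ks) outs)) = 1\<^sub>m (slot p d)"
      and g: "\<And>K L. g K L = upd_slot p (slot p L * K) L"
    for p d outs and g :: "cmat \<Rightarrow> cmat3 \<Rightarrow> cmat3"
  proof -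
    let ?Bs = "concat (map (\<lambda>(e,Ks,Ls). map (\<lambda>K. (K,e,Ls)) Ks) outs)"
    have "P d (concat (map (\<lambda>(K,e,Ls). map (\<lambda>L. mult3 L (upd_slot p K (one3 d))) Ls) ?Bs))"
    proof (rule round)
      fix K e Ls assume "(K,e,Ls) \<in> set ?Bs"
      then obtain Ks where "(e,Ks,Ls) \<in> set outs" "K \<in> set Ks" by auto
      then show "K \<in> carrier_mat e (slot p d) \<and> locc_tree b (upd_slot p e d) Ls \<and> P (upd_slot p e d) Ls"
        using outs by fastforce
    next
      show "msum (slot p d) (slot p d) (map (\<lambda>(K,e,Ls). adj K * K) ?Bs) = 1\<^sub>m (slot p d)"
        using complete by (simp add: concat_kraus_as_branches)
    qed
    moreover have "concat (map (\<lambda>(e,Ks,Ls). concat (map (\<lambda>K. map (g K) Ls) Ks)) outs)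
        = concat (map (\<lambda>(K,e,Ls). map (\<lambda>L. mult3 L (upd_slot p K (one3 d))) Ls) ?Bs)"
    proof (rule concat_round_as_branches)
      fix e Ks Ls K L assume "(e,Ks,Ls) \<in> set outs" "K \<in> set Ks" "L \<in> set Ls"
      then have "L \<in> carrier3 b (upd_slot p e d)" using outs locc_tree_carrier3 by fastforce
      then show "g K L = mult3 L (upd_slot p K (one3 d))" by (simp add: g mult3_upd_slot_one3)
    qed
    ultimately show ?thesis by simp
  qed
  from tree show ?thesis
  proof (induction rule: locc_tree.induct)
    case (stop d1 d2 d3)
    then show ?case using leaf by simp
  next
    case (round1 outs d1 d2 d3)
    show ?case by (rule step[where p=Alice]) (use round1 in auto)
  next
    case (round2 outs d2 d1 d3)
    show ?case by (rule step[where p=Bob]) (use round2 in auto)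
  next
    case (round3 outs d3 d1 d2)
    show ?case by (rule step[where p=Charlie]) (use round3 in auto)
  qed
qed

lemma locc_tree_complete:
  assumes "locc_tree b d Ls"
  shows "msum (dim3 d) (dim3 d) (map gram3 Ls) = 1\<^sub>m (dim3 d)"
  using assms
proof (induction rule: locc_tree_round_induct)
  case leaf
  then show ?case by (simp add: gram3_one3)
next
  case (round p d Bs)
  let ?n = "dim3 d"
    and ?branch = "\<lambda>(K::cmat,e::nat,Ls::cmat3 list). map (\<lambda>L. mult3 L (upd_slot p K (one3 d))) Ls"
    and ?f = "\<lambda>(K::cmat,e::nat,Ls::cmat3 list). adj K * K"
  have branch: "set (?branch B) \<subseteq> carrier3 b d \<and>
      msum ?n ?n (map gram3 (?branch B)) = prod3 (upd_slot p (?f B) (one3 d)) \<and>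
      ?f B \<in> carrier_mat (slot p d) (slot p d)"
    if B: "B \<in> set Bs" for B
  proof -
    obtain K e Ls where KeLs: "B = (K,e,Ls)" by (cases B)
    have K: "K \<in> carrier_mat e (slot p d)" and tree: "locc_tree b (upd_slot p e d) Ls"
      and complete: "msum (dim3 (upd_slot p e d)) (dim3 (upd_slot p e d)) (map gram3 Ls) = 1\<^sub>m (dim3 (upd_slot p e d))"
      using round.IH B KeLs by auto
    have V: "upd_slot p K (one3 d) \<in> carrier3 (upd_slot p e d) d"
      using upd_slot_carrier3[OF one3_carrier3[of d] K, where p=p] by simp
    have "set (?branch B) \<subseteq> carrier3 b d"
      using mult3_carrier3[OF subsetD[OF locc_tree_carrier3[OF tree]] V] KeLs by auto
    moreover have "msum ?n ?n (map gram3 (?branch B)) = prod3 (upd_slot p (?f B) (one3 d))"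
      using msum_gram3_mult3[OF locc_tree_carrier3[OF tree] complete V] KeLs by (simp add: gram3_upd_slot_one3 o_def)
    ultimately show ?thesis using K KeLs by (auto intro!: mult_carrier_mat adj_carrier_mat)
  qed
  have carrier: "gram3 L \<in> carrier_mat ?n ?n" if "xs \<in> set (map ?branch Bs)" "L \<in> set xs" for xs L
  proof -
    from that(1) obtain B where "B \<in> set Bs" "xs = ?branch B" unfolding set_map by blast
    then have "L \<in> carrier3 b d" using branch that(2) by blast
    then show ?thesis by (rule gram3_carrier_mat)
  qed
  have "msum ?n ?n (map gram3 (concat (map ?branch Bs)))
      = msum ?n ?n (map (\<lambda>xs. msum ?n ?n (map gram3 xs)) (map ?branch Bs))"
    by (rule msum_map_concat) (rule carrier)
  also have "\<dots> = msum ?n ?n (map (\<lambda>B. msum ?n ?n (map gram3 (?branch B))) Bs)"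
    by (simp add: o_def)
  also have "\<dots> = msum ?n ?n (map (\<lambda>B. prod3 (upd_slot p (?f B) (one3 d))) Bs)"
    using branch by (simp cong: map_cong)
  also have "\<dots> = prod3 (upd_slot p (msum (slot p d) (slot p d) (map ?f Bs)) (one3 d))"
    by (rule msum_prod3_upd_slot[where r'="slot p d" and c'="slot p d" and T="one3 d" and r=d and c=d and p=p,
          OF _ one3_carrier3, unfolded upd_slot_slot])
      (use branch in blast)
  also have "\<dots> = 1\<^sub>m ?n"
    using round.hyps by (simp add: prod3_one3)
  finally show ?case .
qed

section \<open>The operator Gamma in coordinates\<close>

definition amp :: "nat \<Rightarrow> nat \<Rightarrow> real" where
  "amp a i = (if a = 0 then (if i = 0 then 1 else 0) else if a = 1 then (if i = 0 then 0 else 1)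
     else if a = 2 then 1 / sqrt 2 else (if i = 0 then 1 / sqrt 2 else - (1 / sqrt 2)))"

text \<open>amp a i = <i|q_a>. The products amp a i * amp a j are tabulated without square roots, so that
  the simplifier evaluates T_gram numerically.\<close>
definition amp_prod :: "nat \<Rightarrow> nat \<Rightarrow> nat \<Rightarrow> real" where
  "amp_prod a i j = (if a = 0 then (if i = 0 \<and> j = 0 then 1 else 0) else if a = 1 then (if i \<noteq> 0 \<and> j \<noteq> 0 then 1 else 0)
     else if a = 2 then 1/2 else (if i = j then 1/2 else -1/2))"

lemma amp_mult: "i < 2 \<Longrightarrow> j < 2 \<Longrightarrow> amp a i * amp a j = amp_prod a i j"
  by (auto simp: amp_def amp_prod_def less_2_cases_iff power2_eq_square[symmetric] power_divide)

definition tvec :: "nat \<times> nat \<times> nat \<Rightarrow> nat \<Rightarrow> real" where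
  "tvec t k = (case t of (a,b,c) \<Rightarrow> amp a (k div 4) * amp b ((k div 2) mod 2) * amp c (k mod 2))"

definition tvec_prod :: "nat \<times> nat \<times> nat \<Rightarrow> nat \<Rightarrow> nat \<Rightarrow> real" where
  "tvec_prod t k l = (case t of (a,b,c) \<Rightarrow> amp_prod a (k div 4) (l div 4) * amp_prod b ((k div 2) mod 2) ((l div 2) mod 2) * amp_prod c (k mod 2) (l mod 2))"

lemma tvec_mult: "k < 8 \<Longrightarrow> l < 8 \<Longrightarrow> tvec t k * tvec t l = tvec_prod t k l"
proof -
  assume "k < 8" "l < 8"
  then have "k div 4 < 2" "l div 4 < 2" by auto
  then show ?thesis
    by (cases t) (simp add: tvec_def tvec_prod_def amp_mult[symmetric] mult_ac)
qed

text \<open>The Choi operator of Gamma is block diagonal in the output index, and the block of output o is the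
  projection onto out_vec o, the product vector q_a (x) q_b (x) q_c if (a,b,c) lies in T and zero
  otherwise (index_Gamma_choi_order).\<close>
definition out_triple :: "nat \<Rightarrow> nat \<times> nat \<times> nat" where
  "out_triple o' = (o' div 16, (o' div 4) mod 4, o' mod 4)"

definition out_index :: "nat \<times> nat \<times> nat \<Rightarrow> nat" where
  "out_index t = (case t of (a,b,c) \<Rightarrow> a*16 + b*4 + c)"

definition out_vec :: "nat \<Rightarrow> nat \<Rightarrow> real" where
  "out_vec o' k = (if out_triple o' \<in> set Tset then tvec (out_triple o') k else 0)"

definition T_gram :: "(nat \<Rightarrow> real) \<Rightarrow> nat \<Rightarrow> nat \<Rightarrow> real" where
  "T_gram w k l = sum_list (map (\<lambda>t. w (out_index t) * tvec_prod t k l) Tset)"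

lemma out_index_triple: "out_index (out_triple o') = o'"
proof -
  have "o' mod 16 = 4 * ((o' div 4) mod 4) + o' mod 4"
    using mod_mult2_eq[of o' 4 4] by simp
  then show ?thesis unfolding out_index_def out_triple_def
    using div_mult_mod_eq[of o' 16] by simp
qed

lemma out_triple_index: "t \<in> set Tset \<Longrightarrow> out_triple (out_index t) = t"
  unfolding Tset_def by (auto simp: out_index_def out_triple_def)

lemma out_index_less: "t \<in> set Tset \<Longrightarrow> out_index t < 64"
  unfolding Tset_def by (auto simp: out_index_def)

lemma out_triple_eq_iff: "o1 < 64 \<Longrightarrow> o2 < 64 \<Longrightarrow> out_triple o1 = out_triple o2 \<longleftrightarrow> o1 = o2"
  by (metis out_index_triple)

lemma distinct_Tset: "distinct Tset" by (simp add: Tset_def)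

lemma sum_out_triples:
  fixes g :: "nat \<times> nat \<times> nat \<Rightarrow> 'a::comm_monoid_add"
  shows "(\<Sum>o'<64. if out_triple o' \<in> set Tset then g (out_triple o') else 0) = sum_list (map g Tset)"
proof -
  have "(\<Sum>o'<64. if out_triple o' \<in> set Tset then g (out_triple o') else 0) = (\<Sum>o'\<in>{o'\<in>{..<64}. out_triple o' \<in> set Tset}. g (out_triple o'))"
    by (rule sum.inter_filter[symmetric]) simp
  also have "{o'\<in>{..<64}. out_triple o' \<in> set Tset} = out_index ` set Tset"
  proof
    show "{o'\<in>{..<64}. out_triple o' \<in> set Tset} \<subseteq> out_index ` set Tset"
      using out_index_triple by (auto intro: image_eqI[where x="out_triple _"])
    show "out_index ` set Tset \<subseteq> {o'\<in>{..<64}. out_triple o' \<in> set Tset}"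
      using out_index_less out_triple_index by auto
  qed
  also have "(\<Sum>o'\<in>out_index ` set Tset. g (out_triple o')) = (\<Sum>t\<in>set Tset. g (out_triple (out_index t)))"
    by (rule sum.reindex[unfolded o_def]) (metis out_triple_index inj_onI)
  also have "\<dots> = (\<Sum>t\<in>set Tset. g t)" by (simp add: out_triple_index)
  also have "\<dots> = sum_list (map g Tset)" using distinct_Tset by (simp add: sum_list_distinct_conv_sum_set)
  finally show ?thesis .
qed

lemma sum_out_vec_mult: "k < 8 \<Longrightarrow> l < 8 \<Longrightarrow> (\<Sum>o'<64. w o' * out_vec o' k * out_vec o' l) = T_gram w k l"
proof -
  assume kl: "k < 8" "l < 8"
  have "(\<Sum>o'<64. w o' * out_vec o' k * out_vec o' l) = (\<Sum>o'<64. if out_triple o' \<in> set Tset then w (out_index (out_triple o')) * tvec_prod (out_triple o') k l else 0)"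
    using kl by (intro sum.cong) (auto simp: out_vec_def out_index_triple tvec_mult[symmetric])
  also have "\<dots> = T_gram w k l" unfolding T_gram_def by (rule sum_out_triples)
  finally show ?thesis .
qed

lemma sum_list_Tset_delta:
  "sum_list (map (\<lambda>t. if u = t \<and> v = t then F t else 0) Tset) = (if u = v \<and> u \<in> set Tset then F u else (0::'a::comm_monoid_add))"
proof -
  have "sum_list (map (\<lambda>t. if u = t \<and> v = t then F t else 0) Tset) = (\<Sum>t\<in>set Tset. if u = t \<and> v = t then F t else 0)"
    using distinct_Tset by (simp add: sum_list_distinct_conv_sum_set)
  also have "\<dots> = (if u = v \<and> u \<in> set Tset then F u else 0)"
  proof (cases "u = v")
    case True
    then show ?thesis by (simp add: sum.delta eq_commute[of u])
  next
    case False
    then have "\<And>t. (if u = t \<and> v = t then F t else 0) = 0" by auto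
    then show ?thesis using False by simp
  qed
  finally show ?thesis .
qed

lemma sum_out_triple_delta:
  assumes t: "t \<in> set Tset"
  shows "(\<Sum>o'<64. if out_triple o' = t then F else 0) = (F :: 'a::comm_monoid_add)"
proof -
  have "(\<Sum>o'<64. if out_triple o' = t then F else 0) = (\<Sum>o'<64. if out_triple o' \<in> set Tset then (\<lambda>s. if s = t then F else 0) (out_triple o') else 0)"
    using t by (intro sum.cong) auto
  also have "\<dots> = sum_list (map (\<lambda>s. if s = t then F else 0) Tset)" by (rule sum_out_triples)
  also have "\<dots> = (\<Sum>s\<in>set Tset. if s = t then F else 0)" using distinct_Tset by (simp add: sum_list_distinct_conv_sum_set)
  also have "\<dots> = F" using t by simp
  finally show ?thesis .
qed

lemma T_gram_one: assumes "k < 8" "l < 8" shows "T_gram (\<lambda>_. 1) k l = (if k = l then 2 else 0)"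
proof -
  have k: "k = 0 \<or> k = 1 \<or> k = 2 \<or> k = 3 \<or> k = 4 \<or> k = 5 \<or> k = 6 \<or> k = 7" using assms by auto
  have l: "l = 0 \<or> l = 1 \<or> l = 2 \<or> l = 3 \<or> l = 4 \<or> l = 5 \<or> l = 6 \<or> l = 7" using assms by auto
  from k l show ?thesis
    by (elim disjE; simp add: T_gram_def tvec_prod_def amp_prod_def Tset_def out_index_def)
qed

lemma qket_carrier_mat: "qket a \<in> carrier_mat 2 1"
  unfolding qket_def using ket_carrier_mat[of 2 0] ket_carrier_mat[of 2 1] by auto

lemma index_qket: "i < 2 \<Longrightarrow> qket a $$ (i,0) = complex_of_real (amp a i)"
  by (auto simp: qket_def amp_def ket_def less_2_cases_iff)

lemma bket_carrier_mat: "bket a \<in> carrier_mat 8 1"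
  unfolding bket_def using kron_carrier_mat[OF qket_carrier_mat ket_carrier_mat[of 4 a]] by simp

lemma index_bket: "x < 8 \<Longrightarrow> bket a $$ (x,0) = complex_of_real (amp a (x div 4)) * (if x mod 4 = a then 1 else 0)"
proof -
  assume x: "x < 8"
  have "x div 4 < 2" using x by auto
  have d: "dim_row (ket 4 a) = 4" "dim_col (ket 4 a) = 1" "dim_row (qket a) = 2" "dim_col (qket a) = 1"
    using qket_carrier_mat ket_carrier_mat[of 4 a] by auto
  have "bket a $$ (x,0) = qket a $$ (x div 4, 0) * ket 4 a $$ (x mod 4, 0)"
    unfolding bket_def using x d by (simp add: index_kron)
  then show ?thesis using \<open>x div 4 < 2\<close> by (simp add: index_qket index_ket)
qed

lemma reidx_digits:
  assumes "k < 8" "o' < 64"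
  shows "reidx (k*64+o') div 64 = (k div 4)*4 + o' div 16"
    "(reidx (k*64+o') div 8) mod 8 = ((k div 2) mod 2)*4 + (o' div 4) mod 4"
    "reidx (k*64+o') mod 8 = (k mod 2)*4 + o' mod 4"
    "reidx (k*64+o') < 512"
proof -
  define A where "A = (k div 4)*4 + o' div 16"
  define B where "B = ((k div 2) mod 2)*4 + (o' div 4) mod 4"
  define C where "C = (k mod 2)*4 + o' mod 4"
  have r: "reidx (k*64+o') = (A*8+B)*8+C"
    unfolding reidx_def A_def B_def C_def Let_def using assms by simp
  have "k div 4 < 2" "o' div 16 < 4" "(k div 2) mod 2 < 2" "(o' div 4) mod 4 < 4" "k mod 2 < 2" "o' mod 4 < 4"
    using assms by auto
  then have "A < 8" "B < 8" "C < 8" unfolding A_def B_def C_def by linarith+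
  then show "reidx (k*64+o') div 64 = A" "(reidx (k*64+o') div 8) mod 8 = B" "reidx (k*64+o') mod 8 = C"
    "reidx (k*64+o') < 512"
  proof -
    have r1: "reidx (k*64+o') = (B*8+C) + A*64" unfolding r by simp
    have r2: "reidx (k*64+o') = C + (A*8+B)*8" unfolding r by simp
    have m: "B*8+C < 64" using \<open>B < 8\<close> \<open>C < 8\<close> by linarith
    show "reidx (k*64+o') div 64 = A" unfolding r1 using m by simp
    have "reidx (k*64+o') div 8 = (A*8+B) + C div 8" unfolding r2 by (rule div_mult_self1) simp
    also have "\<dots> = B + A*8" using \<open>C < 8\<close> by simp
    finally have d8: "reidx (k*64+o') div 8 = B + A*8" .
    show "(reidx (k*64+o') div 8) mod 8 = B" unfolding d8 using \<open>B < 8\<close> by (subst mod_mult_self1) simp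
    show "reidx (k*64+o') mod 8 = C" unfolding r2 using \<open>C < 8\<close> by (subst mod_mult_self1) simp
    show "reidx (k*64+o') < 512" unfolding r1 using m \<open>A < 8\<close> by linarith
  qed
qed

lemma index_proj_bket:
  assumes "p1 < 2" "q1 < 4" "p2 < 2" "q2 < 4"
  shows "proj (bket a) $$ (p1*4+q1, p2*4+q2) =
    (if q1 = a \<and> q2 = a then complex_of_real (amp a p1 * amp a p2) else 0)"
proof -
  have "p1*4+q1 < 8" "p2*4+q2 < 8" using assms by linarith+
  then have "proj (bket a) $$ (p1*4+q1, p2*4+q2) = bket a $$ (p1*4+q1, 0) * cnj (bket a $$ (p2*4+q2, 0))"
    by (intro index_proj[OF bket_carrier_mat])
  also have "\<dots> = (if q1 = a \<and> q2 = a then complex_of_real (amp a p1 * amp a p2) else 0)"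
    using \<open>p1*4+q1 < 8\<close> \<open>p2*4+q2 < 8\<close> assms by (simp add: index_bket)
  finally show ?thesis .
qed

definition Gamma_term :: "nat \<times> nat \<times> nat \<Rightarrow> cmat" where
  "Gamma_term t = (case t of (a,b,c) \<Rightarrow> prod3 (proj (bket a), proj (bket b), proj (bket c)))"

lemma Gamma_term_carrier_mat: "Gamma_term t \<in> carrier_mat 512 512"
proof -
  obtain a b c where t: "t = (a,b,c)" by (cases t) auto
  have "Gamma_term t \<in> carrier_mat (dim3 (8,8,8)) (dim3 (8,8,8))"
    unfolding t Gamma_term_def prod.case
    by (rule prod3_carrier_mat) (simp add: proj_carrier_mat[OF bket_carrier_mat])
  then show ?thesis by simp
qed

lemma index_Gamma_term:
  assumes "k < 8" "l < 8" "o1 < 64" "o2 < 64"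
  shows "Gamma_term t $$ (reidx (k*64+o1), reidx (l*64+o2)) =
    (if out_triple o1 = t \<and> out_triple o2 = t then complex_of_real (tvec t k * tvec t l) else 0)"
proof -
  obtain a b c where t: "t = (a,b,c)" by (cases t) auto
  let ?I = "reidx (k*64+o1)" and ?J = "reidx (l*64+o2)"
  note RI = reidx_digits[OF assms(1,3)] and RJ = reidx_digits[OF assms(2,4)]
  have P: "proj (bket x) \<in> carrier_mat 8 8" for x by (rule proj_carrier_mat[OF bket_carrier_mat])
  have dimsP: "dim_row (proj (bket x)) = 8" "dim_col (proj (bket x)) = 8" for x using P[of x] by auto
  have "Gamma_term t $$ (?I, ?J) = proj (bket a) $$ (?I div 64, ?J div 64) * proj (bket b) $$ ((?I div 8) mod 8, (?J div 8) mod 8)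
      * proj (bket c) $$ (?I mod 8, ?J mod 8)"
  proof -
    have I8: "?I div 8 < 64" "?J div 8 < 64" using RI(4) RJ(4) by auto
    have "Gamma_term t $$ (?I, ?J) = kron (proj (bket a)) (proj (bket b)) $$ (?I div 8, ?J div 8) * proj (bket c) $$ (?I mod 8, ?J mod 8)"
      unfolding t Gamma_term_def prod.case prod3_eq using RI(4) RJ(4) by (simp add: index_kron dimsP)
    also have "kron (proj (bket a)) (proj (bket b)) $$ (?I div 8, ?J div 8) =
        proj (bket a) $$ (?I div 8 div 8, ?J div 8 div 8) * proj (bket b) $$ ((?I div 8) mod 8, (?J div 8) mod 8)"
      using I8 by (simp add: index_kron dimsP)
    also have "?I div 8 div 8 = ?I div 64" by (simp add: div_mult2_eq)
    also have "?J div 8 div 8 = ?J div 64" by (simp add: div_mult2_eq)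
    finally show ?thesis .
  qed
  also have "\<dots> = (if out_triple o1 = t \<and> out_triple o2 = t then complex_of_real (tvec t k * tvec t l) else 0)"
  proof -
    have h: "k div 4 < 2" "o1 div 16 < 4" "(k div 2) mod 2 < 2" "(o1 div 4) mod 4 < 4" "k mod 2 < 2" "o1 mod 4 < 4"
      "l div 4 < 2" "o2 div 16 < 4" "(l div 2) mod 2 < 2" "(o2 div 4) mod 4 < 4" "l mod 2 < 2" "o2 mod 4 < 4"
      using assms by auto
    show ?thesis unfolding RI(1-3) RJ(1-3) index_proj_bket[OF h(1,2,7,8)] index_proj_bket[OF h(3,4,9,10)] index_proj_bket[OF h(5,6,11,12)]
      by (simp add: t out_triple_def tvec_def mult_ac)
  qed
  finally show ?thesis .
qed

lemma index_Gamma: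
  assumes "I < 512" "J < 512"
  shows "Gamma $$ (I,J) = (1/2) * sum_list (map (\<lambda>t. Gamma_term t $$ (I,J)) Tset)"
proof -
  have m: "map (\<lambda>(a,b,c). kron (kron (proj (bket a)) (proj (bket b))) (proj (bket c))) Tset = map Gamma_term Tset"
    by (simp add: Gamma_term_def[abs_def] prod3_eq)
  have c: "set (map Gamma_term Tset) \<subseteq> carrier_mat 512 512" using Gamma_term_carrier_mat by auto
  show ?thesis unfolding Gamma_def m using assms msum_carrier_mat[OF c]
    by (simp add: index_msum[OF c] o_def)
qed

lemma index_Gamma_choi_order:
  assumes "k < 8" "l < 8" "o1 < 64" "o2 < 64"
  shows "Gamma_choi_order $$ (k*64+o1, l*64+o2) = (if o1 = o2 then complex_of_real (out_vec o1 k * out_vec o1 l / 2) else 0)"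
proof -
  have i: "k*64+o1 < 512" "l*64+o2 < 512" using assms by linarith+
  have "Gamma_choi_order $$ (k*64+o1, l*64+o2) = Gamma $$ (reidx (k*64+o1), reidx (l*64+o2))"
    unfolding Gamma_choi_order_def using i by simp
  also have "\<dots> = (1/2) * sum_list (map (\<lambda>t. if out_triple o1 = t \<and> out_triple o2 = t then complex_of_real (tvec t k * tvec t l) else 0) Tset)"
    using reidx_digits(4)[OF assms(1,3)] reidx_digits(4)[OF assms(2,4)]
    by (simp add: index_Gamma index_Gamma_term[OF assms])
  also have "\<dots> = (1/2) * (if out_triple o1 = out_triple o2 \<and> out_triple o1 \<in> set Tset then complex_of_real (tvec (out_triple o1) k * tvec (out_triple o1) l) else 0)"
    by (simp only: sum_list_Tset_delta)
  also have "\<dots> = (if o1 = o2 then complex_of_real (out_vec o1 k * out_vec o1 l / 2) else 0)"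
    using out_triple_eq_iff[OF assms(3,4)] by (auto simp: out_vec_def)
  finally show ?thesis .
qed

section \<open>A separable implementation of Gamma\<close>

definition Ekraus :: "nat \<Rightarrow> cmat" where "Ekraus a = ket 4 a * adj (qket a)"

lemma Ekraus_carrier_mat: "Ekraus a \<in> carrier_mat 4 2"
  unfolding Ekraus_def using ket_carrier_mat[of 4 a] adj_carrier_mat[OF qket_carrier_mat[of a]] by (rule mult_carrier_mat)

lemma index_Ekraus: "i < 4 \<Longrightarrow> j < 2 \<Longrightarrow> Ekraus a $$ (i,j) = (if i = a then complex_of_real (amp a j) else 0)"
  unfolding Ekraus_def
  using carrier_matD[OF qket_carrier_mat[of a]]
  by (subst index_mult_mat_sum[OF ket_carrier_mat adj_carrier_mat[OF qket_carrier_mat]]) (auto simp: index_ket index_qket)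

definition Gamma_kraus_triples :: "(cmat \<times> cmat \<times> cmat) list" where
  "Gamma_kraus_triples = map (\<lambda>(a,b,c). (complex_of_real (1 / sqrt 2) \<cdot>\<^sub>m Ekraus a, Ekraus b, Ekraus c)) Tset"

definition Gamma_kraus :: "nat \<times> nat \<times> nat \<Rightarrow> cmat" where
  "Gamma_kraus t = (case t of (a,b,c) \<Rightarrow> prod3 (complex_of_real (1 / sqrt 2) \<cdot>\<^sub>m Ekraus a, Ekraus b, Ekraus c))"

lemma map_prod3_Gamma_kraus_triples: "map prod3 Gamma_kraus_triples = map Gamma_kraus Tset"
  unfolding Gamma_kraus_triples_def Gamma_kraus_def by (auto simp: case_prod_beta)

lemma Gamma_kraus_carrier_mat: "Gamma_kraus t \<in> carrier_mat 64 8"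
proof -
  obtain a b c where t: "t = (a,b,c)" by (cases t) auto
  have "Gamma_kraus t \<in> carrier_mat (dim3 (4,4,4)) (dim3 (2,2,2))"
    unfolding t Gamma_kraus_def prod.case by (rule prod3_carrier_mat) (simp add: Ekraus_carrier_mat)
  then show ?thesis by simp
qed

lemma index_Gamma_kraus:
  assumes "o' < 64" "k < 8"
  shows "Gamma_kraus t $$ (o',k) = complex_of_real (1 / sqrt 2) * (if out_triple o' = t then complex_of_real (tvec t k) else 0)"
proof -
  obtain a b c where t: "t = (a,b,c)" by (cases t) auto
  have ok: "o' < 4*4*4" "k < 2*2*2" using assms by simp_all
  have numerals: "(4::nat) * 4 = 16" "(2::nat) * 2 = 4" by simp_all
  have cs: "complex_of_real (1 / sqrt 2) \<cdot>\<^sub>m Ekraus a \<in> carrier_mat 4 2" using Ekraus_carrier_mat by simp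
  have "Gamma_kraus t $$ (o',k) = (complex_of_real (1 / sqrt 2) \<cdot>\<^sub>m Ekraus a) $$ (o' div 16, k div 4) * Ekraus b $$ ((o' div 4) mod 4, (k div 2) mod 2)
     * Ekraus c $$ (o' mod 4, k mod 2)"
    unfolding t Gamma_kraus_def prod.case using index_prod3[OF cs Ekraus_carrier_mat Ekraus_carrier_mat ok] unfolding numerals .
  also have "\<dots> = complex_of_real (1 / sqrt 2) * (if out_triple o' = t then complex_of_real (tvec t k) else 0)"
  proof -
    have h: "o' div 16 < 4" "k div 4 < 2" "(o' div 4) mod 4 < 4" "(k div 2) mod 2 < 2" "o' mod 4 < 4" "k mod 2 < 2"
      using assms by auto
    show ?thesis using h Ekraus_carrier_mat[of a]
      by (simp add: index_Ekraus t out_triple_def tvec_def)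
  qed
  finally show ?thesis .
qed

lemma Gamma_kraus_entry_mult:
  assumes "o1 < 64" "o2 < 64" "k < 8" "l < 8"
  shows "Gamma_kraus t $$ (o1,k) * cnj (Gamma_kraus t $$ (o2,l)) = (if out_triple o1 = t \<and> out_triple o2 = t then complex_of_real (tvec t k * tvec t l / 2) else 0)"
proof -
  have s: "complex_of_real (1 / sqrt 2) * complex_of_real (1 / sqrt 2) = complex_of_real (1/2)"
  proof -
    have "(1 / sqrt 2) * (1 / sqrt 2) = (1/2 :: real)" by (simp add: power2_eq_square[symmetric] power_divide)
    then show ?thesis by (simp only: of_real_mult[symmetric])
  qed
  show ?thesis unfolding index_Gamma_kraus[OF assms(1,3)] index_Gamma_kraus[OF assms(2,4)]
    using s by (auto simp: mult_ac)
qed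

lemma sum_Gamma_kraus_entries:
  assumes "o1 < 64" "o2 < 64" "k < 8" "l < 8"
  shows "sum_list (map (\<lambda>K. K $$ (o1,k) * cnj (K $$ (o2,l))) (map prod3 Gamma_kraus_triples))
     = (if o1 = o2 then complex_of_real (out_vec o1 k * out_vec o1 l / 2) else 0)"
proof -
  have "sum_list (map (\<lambda>K. K $$ (o1,k) * cnj (K $$ (o2,l))) (map prod3 Gamma_kraus_triples))
     = sum_list (map (\<lambda>t. if out_triple o1 = t \<and> out_triple o2 = t then complex_of_real (tvec t k * tvec t l / 2) else 0) Tset)"
    unfolding map_prod3_Gamma_kraus_triples by (simp add: o_def Gamma_kraus_entry_mult[OF assms])
  also have "\<dots> = (if out_triple o1 = out_triple o2 \<and> out_triple o1 \<in> set Tset then complex_of_real (tvec (out_triple o1) k * tvec (out_triple o1) l / 2) else 0)"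
    by (simp only: sum_list_Tset_delta)
  also have "\<dots> = (if o1 = o2 then complex_of_real (out_vec o1 k * out_vec o1 l / 2) else 0)"
    using out_triple_eq_iff[OF assms(1,2)] by (auto simp: out_vec_def)
  finally show ?thesis .
qed

lemma gram_Gamma_kraus:
  assumes t: "t \<in> set Tset" and "k < 8" "l < 8"
  shows "(adj (Gamma_kraus t) * Gamma_kraus t) $$ (k,l) = complex_of_real (tvec_prod t k l / 2)"
proof -
  have "(adj (Gamma_kraus t) * Gamma_kraus t) $$ (k,l) = (\<Sum>o'<64. adj (Gamma_kraus t) $$ (k,o') * Gamma_kraus t $$ (o',l))"
    by (rule index_mult_mat_sum[OF adj_carrier_mat[OF Gamma_kraus_carrier_mat] Gamma_kraus_carrier_mat assms(2,3)])
  also have "\<dots> = (\<Sum>o'<64. if out_triple o' = t then complex_of_real (tvec t l * tvec t k / 2) else 0)"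
  proof (rule sum.cong[OF refl])
    fix o' assume "o' \<in> {..<64::nat}"
    then have o: "o' < 64" by simp
    have "adj (Gamma_kraus t) $$ (k,o') = cnj (Gamma_kraus t $$ (o',k))" using Gamma_kraus_carrier_mat[of t] o assms by simp
    then show "adj (Gamma_kraus t) $$ (k,o') * Gamma_kraus t $$ (o',l) = (if out_triple o' = t then complex_of_real (tvec t l * tvec t k / 2) else 0)"
      using Gamma_kraus_entry_mult[OF o o assms(3,2), of t] by (simp add: mult.commute)
  qed
  also have "\<dots> = complex_of_real (tvec t l * tvec t k / 2)" by (rule sum_out_triple_delta[OF t])
  also have "\<dots> = complex_of_real (tvec_prod t k l / 2)" using tvec_mult[OF assms(2,3)] by (simp add: mult.commute)
  finally show ?thesis .
qed

lemma Gamma_kraus_complete: "msum 8 8 (map (\<lambda>K. adj K * K) (map prod3 Gamma_kraus_triples)) = 1\<^sub>m 8"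
proof -
  have c: "set (map (\<lambda>K. adj K * K) (map prod3 Gamma_kraus_triples)) \<subseteq> carrier_mat 8 8"
    unfolding map_prod3_Gamma_kraus_triples using Gamma_kraus_carrier_mat
    by (auto intro!: mult_carrier_mat[OF adj_carrier_mat])
  have half: "(\<Sum>t\<leftarrow>xs. complex_of_real (f t / 2)) = complex_of_real ((\<Sum>t\<leftarrow>xs. f t) / 2)" for xs f
    by (induction xs) (auto simp: add_divide_distrib)
  show ?thesis
  proof (rule eq_matI)
    fix k l assume "k < dim_row (1\<^sub>m 8 :: cmat)" "l < dim_col (1\<^sub>m 8 :: cmat)"
    then have kl: "k < 8" "l < 8" by auto
    have "msum 8 8 (map (\<lambda>K. adj K * K) (map prod3 Gamma_kraus_triples)) $$ (k,l)
        = (\<Sum>t\<leftarrow>Tset. (adj (Gamma_kraus t) * Gamma_kraus t) $$ (k,l))"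
      using index_msum[OF c kl] unfolding map_prod3_Gamma_kraus_triples by (simp add: o_def)
    also have "\<dots> = (\<Sum>t\<leftarrow>Tset. complex_of_real (tvec_prod t k l / 2))"
      using gram_Gamma_kraus kl by (intro arg_cong[where f=sum_list] map_cong) auto
    also have "\<dots> = complex_of_real (T_gram (\<lambda>_. 1) k l / 2)"
      unfolding half T_gram_def by simp
    also have "\<dots> = (1\<^sub>m 8 :: cmat) $$ (k,l)" using kl by (simp add: T_gram_one)
    finally show "msum 8 8 (map (\<lambda>K. adj K * K) (map prod3 Gamma_kraus_triples)) $$ (k,l) = (1\<^sub>m 8 :: cmat) $$ (k,l)" .
  qed (use msum_carrier_mat[OF c] in auto)
qed

definition Gamma_map :: "cmat \<Rightarrow> cmat" where "Gamma_map = kraus_apply 64 (map prod3 Gamma_kraus_triples)"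

lemma Gamma_kraus_triples_carrier_mat: "set (map prod3 Gamma_kraus_triples) \<subseteq> carrier_mat 64 8"
  unfolding map_prod3_Gamma_kraus_triples using Gamma_kraus_carrier_mat by auto

lemma Gamma_map_TP: "TP_map 8 64 Gamma_map"
  unfolding Gamma_map_def by (rule kraus_apply_TP_map[OF Gamma_kraus_triples_carrier_mat Gamma_kraus_complete])

lemma Gamma_map_CP: "CP_map 8 64 Gamma_map"
  unfolding CP_map_def Gamma_map_def using Gamma_kraus_triples_carrier_mat by blast

lemma Gamma_map_separable: "separable3 (2,2,2) (4,4,4) Gamma_map"
proof -
  have "\<forall>(E1,E2,E3)\<in>set Gamma_kraus_triples. E1 \<in> carrier_mat 4 2 \<and> E2 \<in> carrier_mat 4 2 \<and> E3 \<in> carrier_mat 4 2"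
    unfolding Gamma_kraus_triples_def using Ekraus_carrier_mat by auto
  then show ?thesis unfolding separable3_def Gamma_map_def by auto
qed

lemma choi_Gamma_map: "choi 8 64 Gamma_map = Gamma_choi_order"
proof (rule eq_matI)
  fix i j assume "i < dim_row Gamma_choi_order" "j < dim_col Gamma_choi_order"
  then have ij: "i < 512" "j < 512" by (auto simp: Gamma_choi_order_def)
  define k where "k = i div 64" define o1 where "o1 = i mod 64"
  define l where "l = j div 64" define o2 where "o2 = j mod 64"
  have b: "k < 8" "l < 8" "o1 < 64" "o2 < 64" using ij unfolding k_def l_def o1_def o2_def by auto
  have i: "i = k*64+o1" "j = l*64+o2" unfolding k_def l_def o1_def o2_def by simp_all
  have M: "\<forall>X\<in>carrier_mat 8 8. Gamma_map X = kraus_apply 64 (map prod3 Gamma_kraus_triples) X" unfolding Gamma_map_def by simp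
  show "choi 8 64 Gamma_map $$ (i,j) = Gamma_choi_order $$ (i,j)"
    unfolding i index_choi_kraus[OF Gamma_kraus_triples_carrier_mat M b] index_Gamma_choi_order[OF b(1,2,3,4)] sum_Gamma_kraus_entries[OF b(3,4,1,2)] ..
qed (auto simp: choi_def Gamma_choi_order_def)

section \<open>Kraus operators of implementations of Gamma\<close>

text \<open>Row o of P is a multiple of out_vec o: the operator maps onto the output |a>|b>|c> only from the
  input q_a (x) q_b (x) q_c of the corresponding triple of T.\<close>
definition T_aligned :: "cmat \<Rightarrow> bool" where
  "T_aligned P \<longleftrightarrow> (\<exists>c. \<forall>o'<64. \<forall>k<8. P $$ (o',k) = c o' * complex_of_real (out_vec o' k))"

lemma T_aligned_smult:
  assumes P: "P \<in> carrier_mat 64 8" and g: "T_aligned P" shows "T_aligned (a \<cdot>\<^sub>m P)"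
proof -
  from g obtain c where c: "\<forall>o'<64. \<forall>k<8. P $$ (o',k) = c o' * complex_of_real (out_vec o' k)"
    unfolding T_aligned_def by blast
  show ?thesis unfolding T_aligned_def
  proof (intro exI[of _ "\<lambda>o'. a * c o'"] allI impI)
    fix o' k :: nat assume ok: "o' < 64" "k < 8"
    then show "(a \<cdot>\<^sub>m P) $$ (o',k) = a * c o' * complex_of_real (out_vec o' k)"
      using P c by (simp add: mult.assoc)
  qed
qed

lemma sum_list_sum_swap: "sum_list (map (\<lambda>x. \<Sum>o'\<in>A. f x o') xs) = (\<Sum>o'\<in>A. sum_list (map (\<lambda>x. f x o') xs))"
  by (induction xs) (simp_all add: sum.distrib)

lemma index_gram_T_aligned:
  assumes P: "P \<in> carrier_mat 64 8" and c: "\<forall>o'<64. \<forall>k<8. P $$ (o',k) = c o' * complex_of_real (out_vec o' k)"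
    and "k < 8" "l < 8"
  shows "(adj P * P) $$ (k,l) = (\<Sum>o'<64. complex_of_real ((cmod (c o'))\<^sup>2 * out_vec o' k * out_vec o' l))"
proof -
  have "(adj P * P) $$ (k,l) = (\<Sum>o'<64. adj P $$ (k,o') * P $$ (o',l))"
    by (rule index_mult_mat_sum[OF adj_carrier_mat[OF P] P assms(3,4)])
  also have "\<dots> = (\<Sum>o'<64. complex_of_real ((cmod (c o'))\<^sup>2 * out_vec o' k * out_vec o' l))"
  proof (rule sum.cong[OF refl])
    fix o' assume "o' \<in> {..<64::nat}"
    then have o: "o' < 64" by simp
    have "adj P $$ (k,o') * P $$ (o',l) = cnj (c o' * complex_of_real (out_vec o' k)) * (c o' * complex_of_real (out_vec o' l))"
      using P o assms(3,4) c by simp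
    also have "\<dots> = (c o' * cnj (c o')) * complex_of_real (out_vec o' k * out_vec o' l)" by (simp add: mult_ac)
    also have "\<dots> = complex_of_real ((cmod (c o'))\<^sup>2 * out_vec o' k * out_vec o' l)"
      by (simp add: complex_norm_square[symmetric])
    finally show "adj P $$ (k,o') * P $$ (o',l) = complex_of_real ((cmod (c o'))\<^sup>2 * out_vec o' k * out_vec o' l)" .
  qed
  finally show ?thesis .
qed

lemma msum_gram_T_aligned:
  assumes A: "\<forall>L\<in>set xs. \<Lambda> L \<in> carrier_mat 64 8 \<and> T_aligned (\<Lambda> L)"
  shows "\<exists>w. \<forall>k<8. \<forall>l<8. msum 8 8 (map (\<lambda>L. adj (\<Lambda> L) * \<Lambda> L) xs) $$ (k,l) = complex_of_real (T_gram w k l)"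
proof -
  have "\<forall>L\<in>set xs. \<exists>c. \<forall>o'<64. \<forall>k<8. \<Lambda> L $$ (o',k) = c o' * complex_of_real (out_vec o' k)"
    using A unfolding T_aligned_def by blast
  then obtain c where c: "\<forall>L\<in>set xs. \<forall>o'<64. \<forall>k<8. \<Lambda> L $$ (o',k) = c L o' * complex_of_real (out_vec o' k)"
    by (metis bchoice)
  define w where "w o' = sum_list (map (\<lambda>L. (cmod (c L o'))\<^sup>2) xs)" for o'
  have car: "set (map (\<lambda>L. adj (\<Lambda> L) * \<Lambda> L) xs) \<subseteq> carrier_mat 8 8"
  proof
    fix X assume "X \<in> set (map (\<lambda>L. adj (\<Lambda> L) * \<Lambda> L) xs)"
    then obtain L where L: "L \<in> set xs" "X = adj (\<Lambda> L) * \<Lambda> L" by auto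
    have "\<Lambda> L \<in> carrier_mat 64 8" using A L by blast
    then show "X \<in> carrier_mat 8 8" unfolding L(2) by (intro mult_carrier_mat[OF adj_carrier_mat])
  qed
  show ?thesis
  proof (intro exI allI impI)
    fix k l :: nat assume kl: "k < 8" "l < 8"
    have "msum 8 8 (map (\<lambda>L. adj (\<Lambda> L) * \<Lambda> L) xs) $$ (k,l) = sum_list (map (\<lambda>L. (adj (\<Lambda> L) * \<Lambda> L) $$ (k,l)) xs)"
      using index_msum[OF car kl] by (simp add: o_def)
    also have "\<dots> = sum_list (map (\<lambda>L. \<Sum>o'<64. complex_of_real ((cmod (c L o'))\<^sup>2 * out_vec o' k * out_vec o' l)) xs)"
    proof (rule arg_cong[where f=sum_list], rule map_cong[OF refl])
      fix L assume L: "L \<in> set xs"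
      show "(adj (\<Lambda> L) * \<Lambda> L) $$ (k,l) = (\<Sum>o'<64. complex_of_real ((cmod (c L o'))\<^sup>2 * out_vec o' k * out_vec o' l))"
        using index_gram_T_aligned[of "\<Lambda> L" "c L" k l] A L c kl by blast
    qed
    also have "\<dots> = (\<Sum>o'<64. sum_list (map (\<lambda>L. complex_of_real ((cmod (c L o'))\<^sup>2 * out_vec o' k * out_vec o' l)) xs))"
      by (rule sum_list_sum_swap)
    also have "\<dots> = (\<Sum>o'<64. complex_of_real (w o' * out_vec o' k * out_vec o' l))"
    proof (rule sum.cong[OF refl])
      fix o'
      have "sum_list (map (\<lambda>L. complex_of_real ((cmod (c L o'))\<^sup>2 * out_vec o' k * out_vec o' l)) xs)
        = sum_list (map complex_of_real (map (\<lambda>L. (cmod (c L o'))\<^sup>2 * (out_vec o' k * out_vec o' l)) xs))"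
        by (simp add: o_def mult.assoc)
      also have "\<dots> = complex_of_real (sum_list (map (\<lambda>L. (cmod (c L o'))\<^sup>2) xs) * (out_vec o' k * out_vec o' l))"
        by (simp only: sum_list_of_real sum_list_mult_const)
      finally show "sum_list (map (\<lambda>L. complex_of_real ((cmod (c L o'))\<^sup>2 * out_vec o' k * out_vec o' l)) xs) = complex_of_real (w o' * out_vec o' k * out_vec o' l)"
        by (simp add: w_def mult.assoc)
    qed
    also have "\<dots> = complex_of_real (\<Sum>o'<64. w o' * out_vec o' k * out_vec o' l)" by simp
    also have "\<dots> = complex_of_real (T_gram w k l)" by (simp add: sum_out_vec_mult kl)
    finally show "msum 8 8 (map (\<lambda>L. adj (\<Lambda> L) * \<Lambda> L) xs) $$ (k,l) = complex_of_real (T_gram w k l)" .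
  qed
qed

lemma sum_list_norm_square_eq_0:
  assumes "sum_list (map (\<lambda>x. z x * cnj (z x)) xs) = 0"
  shows "\<forall>x\<in>set xs. z x = 0"
proof -
  have "sum_list (map (\<lambda>x. z x * cnj (z x)) xs) = sum_list (map complex_of_real (map (\<lambda>x. (cmod (z x))\<^sup>2) xs))"
    by (simp only: map_map o_def complex_norm_square)
  also have "\<dots> = complex_of_real (sum_list (map (\<lambda>x. (cmod (z x))\<^sup>2) xs))" by (rule sum_list_of_real)
  finally have "sum_list (map (\<lambda>x. (cmod (z x))\<^sup>2) xs) = 0" using assms by simp
  then have "\<forall>y\<in>set (map (\<lambda>x. (cmod (z x))\<^sup>2) xs). y = 0"
    by (subst (asm) sum_list_nonneg_eq_0_iff) auto
  then show ?thesis by auto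
qed

lemma rows_proportional:
  fixes r :: "'x \<Rightarrow> nat \<Rightarrow> complex" and u :: "nat \<Rightarrow> real"
  assumes H: "\<And>k l. k < 8 \<Longrightarrow> l < 8 \<Longrightarrow> sum_list (map (\<lambda>y. r y k * cnj (r y l)) xs) = complex_of_real (u k * u l / 2)"
    and x: "x \<in> set xs"
  shows "\<exists>c. \<forall>k::nat. k < 8 \<longrightarrow> r x k = c * complex_of_real (u k)"
proof -
  have F1: "r x k * complex_of_real (u m) = r x m * complex_of_real (u k)" if km: "k < 8" "m < 8" for k m :: nat
  proof -
    let ?z = "\<lambda>y. r y k * complex_of_real (u m) - r y m * complex_of_real (u k)"
    have e: "?z y * cnj (?z y) = complex_of_real (u m * u m) * (r y k * cnj (r y k)) - complex_of_real (u m * u k) * (r y k * cnj (r y m))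
       - complex_of_real (u k * u m) * (r y m * cnj (r y k)) + complex_of_real (u k * u k) * (r y m * cnj (r y m))" for y
      by (simp add: algebra_simps)
    have "sum_list (map (\<lambda>y. ?z y * cnj (?z y)) xs) =
      complex_of_real (u m * u m) * sum_list (map (\<lambda>y. r y k * cnj (r y k)) xs) - complex_of_real (u m * u k) * sum_list (map (\<lambda>y. r y k * cnj (r y m)) xs)
       - complex_of_real (u k * u m) * sum_list (map (\<lambda>y. r y m * cnj (r y k)) xs) + complex_of_real (u k * u k) * sum_list (map (\<lambda>y. r y m * cnj (r y m)) xs)"
      unfolding e by (simp add: sum_list_addf sum_list_subtractf sum_list_const_mult)
    also have "\<dots> = 0"
      unfolding H[OF km(1) km(1)] H[OF km(1) km(2)] H[OF km(2) km(1)] H[OF km(2) km(2)]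
      by (simp add: field_simps)
    finally have "\<forall>y\<in>set xs. ?z y = 0" by (rule sum_list_norm_square_eq_0)
    with x show ?thesis by simp
  qed
  have F2: "r x k = 0" if "k < 8" "u k = 0" for k :: nat
  proof -
    have "sum_list (map (\<lambda>y. r y k * cnj (r y k)) xs) = 0" using H[of k k] that by simp
    then show ?thesis using sum_list_norm_square_eq_0[where z="\<lambda>y. r y k" and xs=xs] x by blast
  qed
  show ?thesis
  proof (cases "\<exists>m<8. u m \<noteq> 0")
    case True
    then obtain m where m: "m < 8" "u m \<noteq> 0" by blast
    show ?thesis
    proof (intro exI allI impI)
      fix k :: nat assume k: "k < 8"
      have "r x k * complex_of_real (u m) = r x m * complex_of_real (u k)" by (rule F1[OF k m(1)])
      then show "r x k = r x m / complex_of_real (u m) * complex_of_real (u k)"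
        using m(2) by (simp add: field_simps)
    qed
  next
    case False
    then show ?thesis using F2 by (intro exI[of _ 0]) auto
  qed
qed

lemma T_aligned_of_choi_Gamma:
  assumes Ks: "set Ks \<subseteq> carrier_mat 64 8" and M: "\<forall>X\<in>carrier_mat 8 8. M X = kraus_apply 64 Ks X"
    and choi: "choi 8 64 M = Gamma_choi_order" and K: "K \<in> set Ks"
  shows "T_aligned K"
proof -
  have "\<exists>c. \<forall>k<8. K $$ (o',k) = c * complex_of_real (out_vec o' k)" if o': "o' < 64" for o'
  proof (rule rows_proportional[where r="\<lambda>K k. K $$ (o',k)" and xs=Ks, OF _ K])
    fix k l :: nat assume kl: "k < 8" "l < 8"
    have "(\<Sum>K\<leftarrow>Ks. K $$ (o',k) * cnj (K $$ (o',l))) = choi 8 64 M $$ (k*64+o', l*64+o')"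
      by (rule index_choi_kraus[OF Ks M kl o' o', symmetric])
    also have "\<dots> = complex_of_real (out_vec o' k * out_vec o' l / 2)"
      unfolding choi index_Gamma_choi_order[OF kl o' o'] by simp
    finally show "(\<Sum>K\<leftarrow>Ks. K $$ (o',k) * cnj (K $$ (o',l))) = complex_of_real (out_vec o' k * out_vec o' l / 2)" .
  qed
  then show ?thesis unfolding T_aligned_def by metis
qed

section \<open>No finite-round LOCC protocol implements Gamma\<close>

definition T_first :: "nat \<Rightarrow> nat \<Rightarrow> nat" where
  "T_first b c = (if c = 0 then [0,3,1,2] ! b else if c = 1 then [2,1,3,0] ! b else if c = 2 then [3,0,2,1] ! b else [1,2,0,3] ! b)"

lemma Tset_first: "(a,b,c) \<in> set Tset \<Longrightarrow> a = T_first b c"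
  unfolding Tset_def by (simp add: T_first_def) (elim disjE; simp)

lemma Tset_latin: "(a,b,c) \<in> set Tset \<Longrightarrow> (a',b,c) \<in> set Tset \<Longrightarrow> a = a'"
  using Tset_first by metis

lemma div_mod_digit: "q < (n::nat) \<Longrightarrow> (p*n+q) div n = p \<and> (p*n+q) mod n = q"
proof -
  assume q: "q < n"
  have "(q + p*n) div n = p + q div n" by (rule div_mult_self1) (use q in simp)
  moreover have "(q + p*n) mod n = q mod n" by (rule mod_mult_self1)
  ultimately show ?thesis using q by (simp add: add.commute)
qed

lemma out_triple_digits: "b < 4 \<Longrightarrow> c < 4 \<Longrightarrow> out_triple ((a*4+b)*4+c) = (a,b,c)"
proof -
  assume bc: "b < 4" "c < 4"
  have outer: "((a*4+b)*4+c) div 4 = a*4+b" "((a*4+b)*4+c) mod 4 = c" using div_mod_digit[OF bc(2), of "a*4+b"] by auto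
  have inner: "(a*4+b) div 4 = a" "(a*4+b) mod 4 = b" using div_mod_digit[OF bc(1), of a] by auto
  have div16: "((a*4+b)*4+c) div 16 = ((a*4+b)*4+c) div 4 div 4"
    using div_mult2_eq[of "(a*4+b)*4+c" 4 4] by simp
  show ?thesis unfolding out_triple_def div16 outer inner by simp
qed

lemma bit_digits: fixes x y z :: nat shows "y < 2 \<Longrightarrow> z < 2 \<Longrightarrow> ((x*2+y)*2+z) div (2*2) = x \<and> (((x*2+y)*2+z) div 2) mod 2 = y \<and> ((x*2+y)*2+z) mod 2 = z"
proof -
  assume yz: "y < 2" "z < 2"
  have outer: "((x*2+y)*2+z) div 2 = x*2+y" "((x*2+y)*2+z) mod 2 = z" using div_mod_digit[OF yz(2), of "x*2+y"] by auto
  have inner: "(x*2+y) div 2 = x" "(x*2+y) mod 2 = y" using div_mod_digit[OF yz(1), of x] by auto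
  have div4: "((x*2+y)*2+z) div (2*2) = ((x*2+y)*2+z) div 2 div 2"
    by (rule div_mult2_eq)
  show ?thesis unfolding div4 outer inner by simp
qed

lemma isometry_two_nonzero_rows:
  assumes W: "W \<in> carrier_mat 4 2" and I: "adj W * W = 1\<^sub>m 2"
  shows "\<exists>a a'. a < 4 \<and> a' < 4 \<and> a \<noteq> a' \<and> (\<exists>x<2. W $$ (a,x) \<noteq> 0) \<and> (\<exists>x<2. W $$ (a',x) \<noteq> 0)"
proof (rule ccontr)
  assume N: "\<not> ?thesis"
  have e: "(adj W * W) $$ (x,y) = (\<Sum>a<4. cnj (W $$ (a,x)) * W $$ (a,y))" if "x < 2" "y < 2" for x y
    using that W by (subst index_mult_mat_sum[OF adj_carrier_mat[OF W] W]) (auto intro!: sum.cong)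
  have "(\<Sum>a<4. cnj (W $$ (a,0)) * W $$ (a,0)) = 1" using e[of 0 0] I by simp
  then have "\<exists>a<4. W $$ (a,0) \<noteq> 0"
  proof (rule contrapos_pp)
    assume "\<not> (\<exists>a<4. W $$ (a,0) \<noteq> 0)"
    then have "(\<Sum>a<4. cnj (W $$ (a,0)) * W $$ (a,0)) = 0" by (intro sum.neutral) auto
    then show "(\<Sum>a<4. cnj (W $$ (a,0)) * W $$ (a,0)) \<noteq> 1" by simp
  qed
  then obtain a0 where a0: "a0 < 4" "W $$ (a0,0) \<noteq> 0" by blast
  have N': "False" if "a < 4" "a' < 4" "a \<noteq> a'" "x < 2" "W $$ (a,x) \<noteq> 0" "x' < 2" "W $$ (a',x') \<noteq> 0" for a a' x x'
    using N that by blast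
  have z: "W $$ (a,x) = 0" if "a < 4" "a \<noteq> a0" "x < 2" for a x
  proof (rule ccontr)
    assume "W $$ (a,x) \<noteq> 0"
    show False by (rule N'[of a a0 x 0]) (use that a0 \<open>W $$ (a,x) \<noteq> 0\<close> in auto)
  qed
  have red: "(\<Sum>a<4. cnj (W $$ (a,x)) * W $$ (a,y)) = cnj (W $$ (a0,x)) * W $$ (a0,y)" if "x < 2" "y < 2" for x y
  proof -
    have "(\<Sum>a<4. cnj (W $$ (a,x)) * W $$ (a,y)) = (\<Sum>a<4. if a = a0 then cnj (W $$ (a0,x)) * W $$ (a0,y) else 0)"
      using z that by (intro sum.cong) auto
    also have "\<dots> = cnj (W $$ (a0,x)) * W $$ (a0,y)" using a0 by simp
    finally show ?thesis .
  qed
  have "cnj (W $$ (a0,1)) * W $$ (a0,1) = 1" using e[of 1 1] red[of 1 1] I by simp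
  then have "W $$ (a0,1) \<noteq> 0" by auto
  moreover have "cnj (W $$ (a0,0)) * W $$ (a0,1) = 0" using e[of 0 1] red[of 0 1] I by simp
  ultimately show False using a0 by simp
qed

lemma product_isometry_not_T_aligned:
  assumes W: "W1 \<in> carrier_mat 4 2" "W2 \<in> carrier_mat 4 2" "W3 \<in> carrier_mat 4 2"
    and I: "adj W1 * W1 = 1\<^sub>m 2" "adj W2 * W2 = 1\<^sub>m 2" "adj W3 * W3 = 1\<^sub>m 2"
    and g: "T_aligned (prod3 (W1,W2,W3))"
  shows False
proof -
  from g obtain c where c: "\<forall>o'<64. \<forall>k<8. prod3 (W1,W2,W3) $$ (o',k) = c o' * complex_of_real (out_vec o' k)"
    unfolding T_aligned_def by blast
  have inT: "(a,b,cc) \<in> set Tset" if "a < 4" "b < 4" "cc < 4" "x < 2" "y < 2" "z < 2"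
    "W1 $$ (a,x) \<noteq> 0" "W2 $$ (b,y) \<noteq> 0" "W3 $$ (cc,z) \<noteq> 0" for a b cc x y z
  proof (rule ccontr)
    assume nT: "(a,b,cc) \<notin> set Tset"
    define o' where "o' = (a*4+b)*4+cc"
    define k where "k = (x*2+y)*2+z"
    have ok: "o' < 4*4*4" "k < 2*2*2" unfolding o'_def k_def using that by (simp_all add: algebra_simps)
    have out_triple: "out_triple o' = (a,b,cc)" unfolding o'_def using that by (intro out_triple_digits)
    have kk: "k div (2*2) = x" "(k div 2) mod 2 = y" "k mod 2 = z" unfolding k_def using bit_digits[of y z x] that by simp_all
    have oo: "o' div (4*4) = a" "(o' div 4) mod 4 = b" "o' mod 4 = cc" using out_triple unfolding out_triple_def by simp_all
    have "prod3 (W1,W2,W3) $$ (o',k) = W1 $$ (a,x) * W2 $$ (b,y) * W3 $$ (cc,z)"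
      using index_prod3[OF W ok] unfolding kk oo .
    moreover have "out_vec o' k = 0" unfolding out_vec_def using out_triple nT by simp
    ultimately have "W1 $$ (a,x) * W2 $$ (b,y) * W3 $$ (cc,z) = 0" using c ok by simp
    with that show False by simp
  qed
  obtain a a' where aa: "a < 4" "a' < 4" "a \<noteq> a'" "\<exists>x<2. W1 $$ (a,x) \<noteq> 0" "\<exists>x<2. W1 $$ (a',x) \<noteq> 0"
    using isometry_two_nonzero_rows[OF W(1) I(1)] by blast
  obtain b b' where bb: "b < 4" "\<exists>x<2. W2 $$ (b,x) \<noteq> 0"
    using isometry_two_nonzero_rows[OF W(2) I(2)] by blast
  obtain cc cc' where ccc: "cc < 4" "\<exists>x<2. W3 $$ (cc,x) \<noteq> 0"
    using isometry_two_nonzero_rows[OF W(3) I(3)] by blast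
  obtain x where x: "x < 2" "W1 $$ (a,x) \<noteq> 0" using aa by blast
  obtain x' where x': "x' < 2" "W1 $$ (a',x') \<noteq> 0" using aa by blast
  obtain y where y: "y < 2" "W2 $$ (b,y) \<noteq> 0" using bb by blast
  obtain z where z: "z < 2" "W3 $$ (cc,z) \<noteq> 0" using ccc by blast
  have "(a,b,cc) \<in> set Tset" by (rule inT[OF aa(1) bb(1) ccc(1) x(1) y(1) z(1) x(2) y(2) z(2)])
  moreover have "(a',b,cc) \<in> set Tset" by (rule inT[OF aa(2) bb(1) ccc(1) x'(1) y(1) z(1) x'(2) y(2) z(2)])
  ultimately have "a = a'" by (rule Tset_latin)
  with aa show False by simp
qed

fun digit :: "party \<Rightarrow> nat \<Rightarrow> nat" where
  "digit Alice k = k div 4"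
| "digit Bob k = (k div 2) mod 2"
| "digit Charlie k = k mod 2"

lemma all_party_iff: "(\<forall>q. P q) \<longleftrightarrow> P Alice \<and> P Bob \<and> P Charlie"
  by (metis party.exhaust)

definition agree_off :: "party \<Rightarrow> nat \<Rightarrow> nat \<Rightarrow> bool" where
  "agree_off p k l \<longleftrightarrow> (\<forall>q. q \<noteq> p \<longrightarrow> digit q k = digit q l)"

lemma index_prod3_upd_slot_one3:
  assumes P: "P \<in> carrier_mat 2 2" and kl: "k < 8" "l < 8"
  shows "prod3 (upd_slot p P (one3 (2,2,2))) $$ (k,l) =
    (if agree_off p k l then P $$ (digit p k, digit p l) else 0)"
proof -
  have I: "(1\<^sub>m 2 :: cmat) \<in> carrier_mat 2 2" by simp
  have kl': "k < 2*2*2" "l < 2*2*2" using kl by simp_all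
  have "k div 4 < 2" "l div 4 < 2" using kl by auto
  then show ?thesis
    by (cases p) (simp_all add: index_prod3[OF P I I kl'] index_prod3[OF I P I kl'] index_prod3[OF I I P kl']
        agree_off_def all_party_iff)
qed

text \<open>This is where the choice of T enters: with the entries of T_gram computed explicitly, the
  displayed entries force the off-diagonal part in party p's factor to vanish and its diagonal to be
  constant.\<close>
lemma T_gram_single_party:
  fixes w :: "nat \<Rightarrow> real"
  assumes zero: "\<And>k l. k < 8 \<Longrightarrow> l < 8 \<Longrightarrow> \<not> agree_off p k l \<Longrightarrow> T_gram w k l = 0"
    and same: "\<And>k l k' l'. k < 8 \<Longrightarrow> l < 8 \<Longrightarrow> k' < 8 \<Longrightarrow> l' < 8 \<Longrightarrow> agree_off p k l \<Longrightarrow> agree_off p k' l' \<Longrightarrow>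
      digit p k = digit p k' \<Longrightarrow> digit p l = digit p l' \<Longrightarrow> T_gram w k l = T_gram w k' l'"
  shows "T_gram w 0 (slot p (4,2,1)) = 0 \<and> T_gram w (slot p (4,2,1)) 0 = 0 \<and>
    T_gram w (slot p (4,2,1)) (slot p (4,2,1)) = T_gram w 0 0"
proof (cases p)
  case Alice
  have "T_gram w 0 1 = 0" "T_gram w 0 2 = 0" "T_gram w 0 3 = 0" "T_gram w 0 5 = 0"
    "T_gram w 1 3 = 0" "T_gram w 1 7 = 0" "T_gram w 4 5 = 0" "T_gram w 4 6 = 0" "T_gram w 4 7 = 0"
    "T_gram w 1 0 = 0" "T_gram w 2 0 = 0" "T_gram w 3 0 = 0" "T_gram w 5 0 = 0"
    by (rule zero; simp add: Alice agree_off_def all_party_iff)+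
  moreover have "T_gram w 1 1 = T_gram w 0 0" "T_gram w 1 5 = T_gram w 0 4"
    by (rule same; simp add: Alice agree_off_def all_party_iff)+
  ultimately show ?thesis
    unfolding Alice T_gram_def by (simp add: tvec_prod_def amp_prod_def Tset_def out_index_def)
next
  case Bob
  have "T_gram w 0 1 = 0" "T_gram w 0 3 = 0" "T_gram w 0 4 = 0" "T_gram w 0 5 = 0"
    "T_gram w 1 5 = 0" "T_gram w 1 7 = 0" "T_gram w 2 3 = 0" "T_gram w 2 6 = 0" "T_gram w 2 7 = 0"
    "T_gram w 1 0 = 0" "T_gram w 3 0 = 0" "T_gram w 4 0 = 0" "T_gram w 5 0 = 0"
    by (rule zero; simp add: Bob agree_off_def all_party_iff)+
  moreover have "T_gram w 1 1 = T_gram w 0 0" "T_gram w 1 3 = T_gram w 0 2"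
    by (rule same; simp add: Bob agree_off_def all_party_iff)+
  ultimately show ?thesis
    unfolding Bob T_gram_def by (simp add: tvec_prod_def amp_prod_def Tset_def out_index_def)
next
  case Charlie
  have "T_gram w 0 2 = 0" "T_gram w 0 3 = 0" "T_gram w 0 4 = 0" "T_gram w 0 5 = 0"
    "T_gram w 1 3 = 0" "T_gram w 1 5 = 0" "T_gram w 1 7 = 0" "T_gram w 2 6 = 0" "T_gram w 2 7 = 0"
    "T_gram w 2 0 = 0" "T_gram w 3 0 = 0" "T_gram w 4 0 = 0" "T_gram w 5 0 = 0"
    by (rule zero; simp add: Charlie agree_off_def all_party_iff)+
  moreover have "T_gram w 2 2 = T_gram w 0 0" "T_gram w 2 3 = T_gram w 0 1"
    by (rule same; simp add: Charlie agree_off_def all_party_iff)+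
  ultimately show ?thesis
    unfolding Charlie T_gram_def by (simp add: tvec_prod_def amp_prod_def Tset_def out_index_def)
qed

lemma T_gram_local_scalar:
  assumes P: "P \<in> carrier_mat 2 2"
    and local: "\<And>k l. k < 8 \<Longrightarrow> l < 8 \<Longrightarrow> prod3 (upd_slot p P (one3 (2,2,2))) $$ (k,l) = complex_of_real (T_gram w k l)"
  shows "P = complex_of_real (T_gram w 0 0) \<cdot>\<^sub>m 1\<^sub>m 2"
proof -
  have form: "complex_of_real (T_gram w k l) = (if agree_off p k l then P $$ (digit p k, digit p l) else 0)"
    if "k < 8" "l < 8" for k l
    using local[OF that] index_prod3_upd_slot_one3[OF P that] by simp
  have scalar: "T_gram w 0 e = 0 \<and> T_gram w e 0 = 0 \<and> T_gram w e e = T_gram w 0 0" if "e = slot p (4,2,1)" for e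
    unfolding that
  proof (rule T_gram_single_party)
    show "T_gram w k l = 0" if "k < 8" "l < 8" "\<not> agree_off p k l" for k l
      using form[OF that(1,2)] that(3) by simp
    show "T_gram w k l = T_gram w k' l'"
      if "k < 8" "l < 8" "k' < 8" "l' < 8" "agree_off p k l" "agree_off p k' l'"
        "digit p k = digit p k'" "digit p l = digit p l'" for k l k' l'
    proof -
      have "complex_of_real (T_gram w k l) = complex_of_real (T_gram w k' l')"
        using form[OF that(1,2)] form[OF that(3,4)] that(5-8) by simp
      then show ?thesis by simp
    qed
  qed
  define e where "e = slot p (4,2,1::nat)"
  have e: "e < 8" "digit p e = 1" "agree_off p 0 e" "agree_off p e 0"
    unfolding e_def agree_off_def by (cases p; simp add: all_party_iff)+
  have digit0: "digit q 0 = 0" for q by (cases q) auto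
  show ?thesis
  proof (rule eq_matI)
    fix i j assume "i < dim_row (complex_of_real (T_gram w 0 0) \<cdot>\<^sub>m 1\<^sub>m 2)" "j < dim_col (complex_of_real (T_gram w 0 0) \<cdot>\<^sub>m 1\<^sub>m 2)"
    then have ij: "i < 2" "j < 2" by auto
    have "P $$ (0,0) = complex_of_real (T_gram w 0 0)" using form[of 0 0] by (simp add: digit0 agree_off_def)
    moreover have "P $$ (0,1) = complex_of_real (T_gram w 0 e)" "P $$ (1,0) = complex_of_real (T_gram w e 0)"
      "P $$ (1,1) = complex_of_real (T_gram w e e)"
      using form[of 0 e] form[of e 0] form[of e e] e by (simp_all add: digit0 agree_off_def)
    ultimately show "P $$ (i,j) = (complex_of_real (T_gram w 0 0) \<cdot>\<^sub>m 1\<^sub>m 2) $$ (i,j)"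
      using ij scalar[OF e_def] by (auto simp: less_2_cases_iff)
  qed (use P in auto)
qed

definition isometric3 :: "cmat3 \<Rightarrow> bool" where
  "isometric3 W \<longleftrightarrow> (\<forall>p. adj (slot p W) * slot p W = 1\<^sub>m 2)"

lemma isometric3_one3: "isometric3 (one3 (2,2,2))"
  unfolding isometric3_def by (simp add: all_party_iff)

lemma isometric3_upd_slot: "isometric3 W \<Longrightarrow> adj X * X = 1\<^sub>m 2 \<Longrightarrow> isometric3 (upd_slot p X W)"
  unfolding isometric3_def by (cases p; cases W) (auto simp: all_party_iff)

lemma gram3_upd_slot_isometric3:
  "isometric3 W \<Longrightarrow> gram3 (upd_slot p A W) = prod3 (upd_slot p (adj A * A) (one3 (2,2,2)))"
  unfolding isometric3_def by (cases p; cases W) (auto simp: gram3_eq all_party_iff)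

lemma prod3_mult3_upd_slot_smult:
  assumes "L \<in> carrier3 b m" "X \<in> carrier_mat (slot p m) n"
  shows "prod3 (mult3 L (upd_slot p (a \<cdot>\<^sub>m X) W)) = a \<cdot>\<^sub>m prod3 (mult3 L (upd_slot p X W))"
  using assms
  by (cases p; cases L; cases W; cases b; cases m)
    (auto simp: mult_smult_distrib prod3_eq kron_smult_left kron_smult_right)

lemma aligned_branch_gram_scalar:
  assumes tree: "locc_tree (4,4,4) d Ls" and U: "isometric3 U"
    and A: "A \<in> carrier_mat (slot p d) 2" and W: "upd_slot p A U \<in> carrier3 d (2,2,2)"
    and aligned: "\<forall>L\<in>set Ls. T_aligned (prod3 (mult3 L (upd_slot p A U)))"
  obtains w where "adj A * A = complex_of_real (T_gram w 0 0) \<cdot>\<^sub>m 1\<^sub>m 2"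
proof -
  let ?W = "upd_slot p A U"
  have Ls: "set Ls \<subseteq> carrier3 (4,4,4) d" by (rule locc_tree_carrier3[OF tree])
  have leaves: "\<forall>L\<in>set Ls. prod3 (mult3 L ?W) \<in> carrier_mat 64 8 \<and> T_aligned (prod3 (mult3 L ?W))"
  proof
    fix L assume L: "L \<in> set Ls"
    have "prod3 (mult3 L ?W) \<in> carrier_mat (dim3 (4,4,4)) (dim3 (2,2,2))"
      using L Ls W by (intro prod3_carrier_mat mult3_carrier3) auto
    then show "prod3 (mult3 L ?W) \<in> carrier_mat 64 8 \<and> T_aligned (prod3 (mult3 L ?W))"
      using aligned L by simp
  qed
  obtain w where w: "\<forall>k<8. \<forall>l<8. msum 8 8 (map (\<lambda>L. gram3 (mult3 L ?W)) Ls) $$ (k,l) = complex_of_real (T_gram w k l)"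
    unfolding gram3_def using msum_gram_T_aligned[OF leaves] by blast
  have "msum 8 8 (map (\<lambda>L. gram3 (mult3 L ?W)) Ls) = gram3 ?W"
    using msum_gram3_mult3[OF Ls locc_tree_complete[OF tree] W] by simp
  also have "\<dots> = prod3 (upd_slot p (adj A * A) (one3 (2,2,2)))"
    by (rule gram3_upd_slot_isometric3[OF U])
  finally have local: "prod3 (upd_slot p (adj A * A) (one3 (2,2,2))) $$ (k,l) = complex_of_real (T_gram w k l)"
    if "k < 8" "l < 8" for k l
    using w that by simp
  have "adj A * A = complex_of_real (T_gram w 0 0) \<cdot>\<^sub>m 1\<^sub>m 2"
    by (rule T_gram_local_scalar[OF _ local]) (use A in \<open>auto intro: mult_carrier_mat adj_carrier_mat\<close>)
  then show thesis by (rule that)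
qed

lemma aligned_branch_null:
  assumes tree: "locc_tree (4,4,4) d Ls" and U: "isometric3 U"
    and A: "A \<in> carrier_mat (slot p d) 2" and W: "upd_slot p A U \<in> carrier3 d (2,2,2)"
    and IH: "\<And>W'. W' \<in> carrier3 d (2,2,2) \<Longrightarrow> isometric3 W' \<Longrightarrow> \<not> (\<forall>L\<in>set Ls. T_aligned (prod3 (mult3 L W')))"
    and aligned: "\<forall>L\<in>set Ls. T_aligned (prod3 (mult3 L (upd_slot p A U)))"
  shows "(adj A * A) $$ (0,0) = 0"
proof -
  obtain w where AA: "adj A * A = complex_of_real (T_gram w 0 0) \<cdot>\<^sub>m 1\<^sub>m 2"
    using aligned_branch_gram_scalar[OF tree U A W aligned] .
  have "T_gram w 0 0 = 0"
  proof (rule ccontr)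
    assume "T_gram w 0 0 \<noteq> 0"
    moreover have "(adj A * A) $$ (0,0) = complex_of_real (T_gram w 0 0)" unfolding AA by simp
    then have "complex_of_real (T_gram w 0 0) = complex_of_real (\<Sum>i<slot p d. (cmod (A $$ (i,0)))\<^sup>2)"
      using index_gram_0_0[OF A] by simp
    then have "T_gram w 0 0 \<ge> 0" by (simp only: of_real_eq_iff) (simp add: sum_nonneg)
    ultimately have pos: "T_gram w 0 0 > 0" by simp
    let ?c = "complex_of_real (1 / sqrt (T_gram w 0 0))"
    have "upd_slot p (?c \<cdot>\<^sub>m A) U \<in> carrier3 d (2,2,2)"
      using upd_slot_carrier3[OF W smult_carrier_mat[OF A], of p] by (cases p) auto
    moreover have "isometric3 (upd_slot p (?c \<cdot>\<^sub>m A) U)"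
      by (rule isometric3_upd_slot[OF U isometry_rescale[OF A AA pos]])
    moreover have "T_aligned (prod3 (mult3 L (upd_slot p (?c \<cdot>\<^sub>m A) U)))" if L: "L \<in> set Ls" for L
    proof -
      have "L \<in> carrier3 (4,4,4) d" using L locc_tree_carrier3[OF tree] by auto
      then have "prod3 (mult3 L (upd_slot p (?c \<cdot>\<^sub>m A) U)) = ?c \<cdot>\<^sub>m prod3 (mult3 L (upd_slot p A U))"
        by (rule prod3_mult3_upd_slot_smult) (use A in simp)
      moreover have "prod3 (mult3 L (upd_slot p A U)) \<in> carrier_mat (dim3 (4,4,4)) (dim3 (2,2,2))"
        using \<open>L \<in> carrier3 (4,4,4) d\<close> W by (intro prod3_carrier_mat mult3_carrier3)
      ultimately show ?thesis using aligned L by (auto intro: T_aligned_smult)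
    qed
    ultimately show False using IH by blast
  qed
  then show ?thesis using AA by simp
qed

lemma complete_instrument_nonzero_branch:
  fixes Bs :: "(cmat \<times> nat \<times> 'a) list"
  assumes Ks: "\<And>K e Ls. (K,e,Ls) \<in> set Bs \<Longrightarrow> K \<in> carrier_mat e n"
    and complete: "msum n n (map (\<lambda>(K,e,Ls). adj K * K) Bs) = 1\<^sub>m n"
    and W: "W \<in> carrier_mat n 2" "adj W * W = 1\<^sub>m 2"
  shows "\<exists>(K,e,Ls)\<in>set Bs. (adj (K * W) * (K * W)) $$ (0,0) \<noteq> 0"
proof (rule ccontr)
  assume null: "\<not> ?thesis"
  let ?f = "\<lambda>(K::cmat,e::nat,Ls::'a). adj K * K"
    and ?g = "\<lambda>(K::cmat,e::nat,Ls::'a). adj (K * W) * (K * W)"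
  have "map ?g Bs = map (\<lambda>B. adj W * ?f B * W) Bs"
  proof (rule map_cong[OF refl])
    fix B assume B: "B \<in> set Bs"
    obtain K e Ls where KeLs: "B = (K,e,Ls)" by (cases B)
    with B Ks have "K \<in> carrier_mat e n" by blast
    with KeLs show "?g B = adj W * ?f B * W"
      using adj_mult_sandwich[OF _ W(1)] by simp
  qed
  also have "msum 2 2 \<dots> = adj W * msum n n (map ?f Bs) * W"
    using Ks W by (intro msum_mult_sandwich adj_carrier_mat) (auto intro!: mult_carrier_mat adj_carrier_mat)
  also have "\<dots> = 1\<^sub>m 2" using complete W by simp
  finally have total: "msum 2 2 (map ?g Bs) = 1\<^sub>m 2" .
  have "set (map ?g Bs) \<subseteq> carrier_mat 2 2"
  proof
    fix X assume "X \<in> set (map ?g Bs)"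
    then obtain K e Ls where B: "(K,e,Ls) \<in> set Bs" and X: "X = adj (K * W) * (K * W)" by auto
    have "K * W \<in> carrier_mat e 2" using Ks[OF B] W by simp
    then show "X \<in> carrier_mat 2 2" unfolding X by (intro mult_carrier_mat[OF adj_carrier_mat])
  qed
  from index_msum[OF this, of 0 0] total have "(\<Sum>B\<leftarrow>Bs. ?g B $$ (0,0)) = 1"
    by (simp add: o_def)
  moreover have "(\<Sum>B\<leftarrow>Bs. ?g B $$ (0,0)) = (\<Sum>B\<leftarrow>Bs. 0)"
    using null by (intro arg_cong[where f=sum_list] map_cong) auto
  ultimately show False by simp
qed

lemma locc_leaves_not_T_aligned:
  assumes "locc_tree (4,4,4) d Ls" "W \<in> carrier3 d (2,2,2)" "isometric3 W"
  shows "\<not> (\<forall>L\<in>set Ls. T_aligned (prod3 (mult3 L W)))"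
  using assms
proof (induction arbitrary: W rule: locc_tree_round_induct)
  case leaf
  obtain W1 W2 W3 where W: "W = (W1,W2,W3)" by (cases W)
  have "mult3 (one3 (4,4,4)) W = W" using leaf.prems W by auto
  then show ?case
    using product_isometry_not_T_aligned leaf.prems W unfolding isometric3_def by (auto simp: all_party_iff)
next
  case (round p d Bs W)
  let ?V = "\<lambda>K. upd_slot p K (one3 d)" and ?Wp = "slot p W"
  have Wp: "?Wp \<in> carrier_mat (slot p d) 2" using slot_carrier3[OF round.prems(1), of p] by (cases p) auto
  have Kcarrier: "\<And>K e Ls. (K,e,Ls) \<in> set Bs \<Longrightarrow> K \<in> carrier_mat e (slot p d)" using round.IH by blast
  show ?case
  proof
    assume aligned: "\<forall>L\<in>set (concat (map (\<lambda>(K,e,Ls). map (\<lambda>L. mult3 L (?V K)) Ls) Bs)). T_aligned (prod3 (mult3 L W))"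
    have null: "(adj (K * ?Wp) * (K * ?Wp)) $$ (0,0) = 0" if B: "(K,e,Ls) \<in> set Bs" for K e Ls
    proof (rule aligned_branch_null[where d="upd_slot p e d" and Ls=Ls and U=W and p=p])
      have K: "K \<in> carrier_mat e (slot p d)" and tree: "locc_tree (4,4,4) (upd_slot p e d) Ls"
        using round.IH[OF B] by auto
      show "locc_tree (4,4,4) (upd_slot p e d) Ls" by (rule tree)
      show "isometric3 W" by (rule round.prems(2))
      show A: "K * ?Wp \<in> carrier_mat (slot p (upd_slot p e d)) 2" using K Wp by simp
      show "upd_slot p (K * ?Wp) W \<in> carrier3 (upd_slot p e d) (2,2,2)"
        using upd_slot_carrier3[OF round.prems(1) A, of p] by (cases p) auto
      show "\<And>W'. W' \<in> carrier3 (upd_slot p e d) (2,2,2) \<Longrightarrow> isometric3 W' \<Longrightarrow>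
          \<not> (\<forall>L\<in>set Ls. T_aligned (prod3 (mult3 L W')))"
        using round.IH[OF B] by auto
      have V: "?V K \<in> carrier3 (upd_slot p e d) d"
        using upd_slot_carrier3[OF one3_carrier3[of d] K, where p=p] by simp
      show "\<forall>L\<in>set Ls. T_aligned (prod3 (mult3 L (upd_slot p (K * ?Wp) W)))"
      proof
        fix L assume L: "L \<in> set Ls"
        have L': "L \<in> carrier3 (4,4,4) (upd_slot p e d)" using L locc_tree_carrier3[OF tree] by auto
        have "mult3 L (?V K) \<in> set (concat (map (\<lambda>(K,e,Ls). map (\<lambda>L. mult3 L (?V K)) Ls) Bs))"
          using B L by force
        then have "T_aligned (prod3 (mult3 (mult3 L (?V K)) W))" using aligned by blast
        then show "T_aligned (prod3 (mult3 L (upd_slot p (K * ?Wp) W)))"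
          unfolding mult3_assoc[OF L' V round.prems(1)] upd_slot_one3_mult3[OF round.prems(1)] .
      qed
    qed
    have "\<exists>(K,e,Ls)\<in>set Bs. (adj (K * ?Wp) * (K * ?Wp)) $$ (0,0) \<noteq> 0"
      using round.prems(2) unfolding isometric3_def
      by (intro complete_instrument_nonzero_branch[OF Kcarrier round.hyps Wp]) auto
    then show False using null by blast
  qed
qed

theorem mainTheorem19:
  shows "(\<exists>M. CPTP_map 8 64 M \<and> separable3 (2,2,2) (4,4,4) M \<and> choi 8 64 M = Gamma_choi_order)
       \<and> (\<forall>M. LOCC3 (2,2,2) (4,4,4) M \<longrightarrow> choi 8 64 M \<noteq> Gamma_choi_order)"
proof (intro conjI allI impI notI)
  show "\<exists>M. CPTP_map 8 64 M \<and> separable3 (2,2,2) (4,4,4) M \<and> choi 8 64 M = Gamma_choi_order"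
    using Gamma_map_CP Gamma_map_TP Gamma_map_separable choi_Gamma_map unfolding CPTP_map_def by blast
next
  fix M assume "LOCC3 (2,2,2) (4,4,4) M" and choi: "choi 8 64 M = Gamma_choi_order"
  then obtain Ls where tree: "locc_tree (4,4,4) (2,2,2) Ls"
    and M: "\<forall>X\<in>carrier_mat 8 8. M X = kraus_apply 64 (map prod3 Ls) X"
    unfolding LOCC3_def by auto
  have Ls: "set Ls \<subseteq> carrier3 (4,4,4) (2,2,2)" by (rule locc_tree_carrier3[OF tree])
  then have Ks: "set (map prod3 Ls) \<subseteq> carrier_mat 64 8"
    using prod3_carrier_mat[of _ "(4,4,4)" "(2,2,2)"] by auto
  have "T_aligned (prod3 (mult3 L (one3 (2,2,2))))" if L: "L \<in> set Ls" for L
  proof -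
    have "mult3 L (one3 (2,2,2)) = L" by (rule mult3_one3_right[of _ "(4,4,4)"]) (use L Ls in blast)
    then show ?thesis using T_aligned_of_choi_Gamma[OF Ks M choi] L by simp
  qed
  then show False
    using locc_leaves_not_T_aligned[OF tree one3_carrier3 isometric3_one3] by blast
qed

end
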